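(* Fix $K\in\mathbb N$ and $\epsilon=1/(2HK)$. Let $\bar\varTheta$ be a finite set of parameter vectors and $\iota:\varTheta\to\bar\varTheta$ a measurable surjective map such that for every $\theta\in\varTheta$, $\|\Pr^\pi_{\iota(\theta)}-\Pr^\pi_\theta\|_{\mathrm{TV}}\le2H\epsilon$ for all $\pi\in\varPi$ and $\Pr^-_{\iota(\theta)}(\tau)\ge(1+\epsilon)^{-2H}\Pr^-_\theta(\tau)$ for all $\tau\in\mathscr T$. Then the Bayesian regret of the PS4POMDPs algorithm satisfies $$\mathrm{BReg}(\phi^{\mathrm{PS4POMDPs}},K)\le2H+H\,\mathbb E\Big[\sum_{k=1}^K\max_{\bar\theta\in\bar\varTheta(\mathcal D_k)}\|\Pr^{\tilde\pi^k}_{\bar\theta}-\Pr^{\tilde\pi^k}_{\theta^*}\|_{\mathrm{TV}}\Big].$$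
   Context: A finite-horizon POMDP is a tuple $(\mathscr S,\mathscr A,\mathscr O,H,b_1,T,Z,r)$ with finite state set $\mathscr S$ ($|\mathscr S|=S$), finite action set $\mathscr A$ ($|\mathscr A|=A$), finite observation set $\mathscr O$ ($|\mathscr O|=O$), horizon $H\in\mathbb N$, initial state distribution $b_1\in\Delta(\mathscr S)$, transition kernels $T_h:\mathscr S\times\mathscr A\to\Delta(\mathscr S)$ for $h\in[H-1]$, observation kernels $Z_h:\mathscr S\to\Delta(\mathscr O)$ for $h\in[H]$, and rewards $r_h:\mathscr O\times\mathscr A\to[0,1]$ for $h\in[H]$. A (deterministic) policy $\pi=(\pi_h)_{h=1}^H$ consists of maps $\pi_h:(\mathscr O\times\mathscr A)^{h-1}\times\mathscr O\to\mathscr A$; $\varPi$ is the set of all such policies, and $\pi_h(a\mid\tau_{h-1},o):=\mathbf 1\{\pi_h(\tau_{h-1},o)=a\}$. A trajectory is $\tau=(o_h,a_h)_{h=1}^H\in\mathscr T:=(\mathscr O\times\mathscr A)^H$, and $\tau_h$ denotes its first $h$ observation–action pairs. Its probability under $\pi$ is $\Pr^\pi(\tau)=\pi(\tau)\Pr^-(\tau)$, where $\pi(\tau)=\prod_{h=1}^H\pi_h(a_h\mid\tau_{h-1},o_h)$ and $\Pr^-(\tau)=\sum_{s_{1:H}\in\mathscr S^H}b_1(s_1)Z_H(o_H\mid s_H)\prod_{h=1}^{H-1}Z_h(o_h\mid s_h)T_h(s_{h+1}\mid s_h,a_h)$. The value of $\pi$ is $V^\pi=\sum_{\tau\in\mathscr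 T}\Pr^\pi(\tau)\sum_{h=1}^Hr_h(o_h,a_h)$ and $V^*=\max_{\pi\in\varPi}V^\pi$. Learning setting: $\mathscr S,\mathscr A,\mathscr O,H,r$ are known; $(b_1,T,Z)=(b_1^\theta,T^\theta,Z^\theta)$ depends on a parameter $\theta$ in a known Borel parameter set $\varTheta$ via a known measurable parameterization; quantities of the POMDP with parameter $\theta$ carry a subscript $\theta$ ($\Pr^\pi_\theta,\Pr^-_\theta,V^\pi_\theta,V^*_\theta$). The true parameter $\theta^*$ is random with prior $\nu^1\in\Delta(\varTheta)$. In episodes $k=1,2,\dots$, with data $\mathcal D_k=(\tau^j,\pi^j)_{j=1}^{k-1}$, a learning algorithm $\phi=(\phi_k)_k$ draws a policy $\pi^k\sim\phi_k(\mathcal D_k)\in\Delta(\varPi)$, applies it during the whole episode and observes the trajectory $\tau^k\sim\Pr^{\pi^k}_{\theta^*}$. The Bayesian regret over $K$ episodes is $\mathrm{BReg}(\phi,K)=\mathbb E^\phi\big[\sum_{k=1}^K(V^*_{\theta^*}-V^{\pi^k}_{\theta^*})\big]$, the expectation being over $\theta^*\sim\nu^1$, the algorithm's randomness and the trajectories. The PS4POMDPs algorithm: in episode $k$, given the posterior $\nu^k$ ($\nu^1$ = prior), sample $\tilde\theta^k\sim\nu^k$, compute (with an exact planner) $\tilde\pi^k\in\arg\max_{\pi\in\varPi}V^\pi_{\tilde\theta^k}$, play $\pi^k=\tilde\pi^k$, observe $\tau^k$, and update by Bayes' rule $\frac{d\nu^{k+1}}{d\nu^k}(\theta)=\Pr^{\tilde\pi^k}_\theta(\tau^k)\big/\int_\varTheta\Pr^{\tilde\pi^k}_{\theta'}(\tau^k)\,d\nu^k(\theta')$.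 Parameters are identified directly with vectors $(b_1,T,Z)\in[0,1]^{S+(H-1)S^2A+HSO}$ whose blocks are probability distributions; any such vector defines $\Pr^\pi_\theta$, $\Pr^-_\theta$. $\|\cdot\|_{\mathrm{TV}}$ is total variation distance between distributions on $\mathscr T$. Log-likelihood: $\ell(\theta,\mathcal D_k)=\sum_{j=1}^{k-1}\log\Pr^{\pi^j}_\theta(\tau^j)$; $\bar\ell^*(\mathcal D_k)=\max_{\theta\in\bar\varTheta}\ell(\theta,\mathcal D_k)$ (maximum over the finite set $\bar\varTheta$). Confidence set: $\bar\varTheta(\mathcal D_k)=\{\bar\theta\in\bar\varTheta:\ \ell(\bar\theta,\mathcal D_k)\ge\bar\ell^*(\mathcal D_k)-\log(K|\bar\varTheta|)-1\}$. *)

theory Defs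
  imports "HOL-Probability.Probability"
begin

text \<open>A parameter vector (b_1, T, Z).  Steps are 1-based as in the paper:
  trans v h s a s' = T_h(s'|s,a) for h in 1..H-1, obsv v h s ob = Z_h(ob|s) for h in 1..H.\<close>
record ('s, 'a, 'o) pvec =
  init  :: "'s \<Rightarrow> real"
  trans :: "nat \<Rightarrow> 's \<Rightarrow> 'a \<Rightarrow> 's \<Rightarrow> real"
  obsv  :: "nat \<Rightarrow> 's \<Rightarrow> 'o \<Rightarrow> real"

text \<open>A vector is a genuine parameter vector iff all blocks are probability distributions;
  coordinates outside the index ranges are not part of the vector and are fixed to 0.\<close>
definition valid_pvec :: "nat \<Rightarrow> ('s::finite, 'a::finite, 'o::finite) pvec \<Rightarrow> bool" where
  "valid_pvec H v \<longleftrightarrow>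
     (\<forall>s. 0 \<le> init v s) \<and> (\<Sum>s\<in>UNIV. init v s) = 1 \<and>
     (\<forall>h s a. h \<in> {1..<H} \<longrightarrow> (\<forall>s'. 0 \<le> trans v h s a s') \<and> (\<Sum>s'\<in>UNIV. trans v h s a s') = 1) \<and>
     (\<forall>h s a s'. h \<notin> {1..<H} \<longrightarrow> trans v h s a s' = 0) \<and>
     (\<forall>h s. h \<in> {1..H} \<longrightarrow> (\<forall>ob. 0 \<le> obsv v h s ob) \<and> (\<Sum>ob\<in>UNIV. obsv v h s ob) = 1) \<and>
     (\<forall>h s ob. h \<notin> {1..H} \<longrightarrow> obsv v h s ob = 0)"

text \<open>Trajectories: lists of H (observation, action) pairs; tau ! i = (o_{i+1}, a_{i+1}).\<close>
definition traj_set :: "nat \<Rightarrow> ('o \<times> 'a) list set" where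
  "traj_set H = {tau. length tau = H}"

text \<open>Deterministic policy: pi hist ob, where hist = tau_{h-1} (a list of length h-1).\<close>
type_synonym ('o, 'a) policy = "('o \<times> 'a) list \<Rightarrow> 'o \<Rightarrow> 'a"

definition pr_minus :: "nat \<Rightarrow> ('s::finite, 'a, 'o) pvec \<Rightarrow> ('o \<times> 'a) list \<Rightarrow> real" where
  "pr_minus H v tau =
     (\<Sum>ss\<in>{ss::'s list. length ss = H}.
        init v (ss ! 0) * obsv v H (ss ! (H - 1)) (fst (tau ! (H - 1))) *
        (\<Prod>i<H - 1. obsv v (Suc i) (ss ! i) (fst (tau ! i)) *
                     trans v (Suc i) (ss ! i) (snd (tau ! i)) (ss ! Suc i)))"

definition pol_prob :: "nat \<Rightarrow> ('o, 'a) policy \<Rightarrow> ('o \<times> 'a) list \<Rightarrow> real" where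
  "pol_prob H pol tau = (\<Prod>i<H. if pol (take i tau) (fst (tau ! i)) = snd (tau ! i) then 1 else 0)"

definition pr_pi :: "nat \<Rightarrow> ('s::finite, 'a, 'o) pvec \<Rightarrow> ('o, 'a) policy \<Rightarrow> ('o \<times> 'a) list \<Rightarrow> real" where
  "pr_pi H v pol tau = pol_prob H pol tau * pr_minus H v tau"

definition value_fn :: "nat \<Rightarrow> (nat \<Rightarrow> 'o \<Rightarrow> 'a \<Rightarrow> real) \<Rightarrow> ('s::finite, 'a, 'o) pvec \<Rightarrow> ('o, 'a) policy \<Rightarrow> real" where
  "value_fn H r v pol =
     (\<Sum>tau\<in>traj_set H. pr_pi H v pol tau * (\<Sum>i<H. r (Suc i) (fst (tau ! i)) (snd (tau ! i))))"

definition opt_value :: "nat \<Rightarrow> (nat \<Rightarrow> 'o \<Rightarrow> 'a \<Rightarrow> real) \<Rightarrow> ('s::finite, 'a, 'o) pvec \<Rightarrow> real" where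
  "opt_value H r v = (SUP pol. value_fn H r v pol)"

definition tv_dist :: "nat \<Rightarrow> (('o \<times> 'a) list \<Rightarrow> real) \<Rightarrow> (('o \<times> 'a) list \<Rightarrow> real) \<Rightarrow> real" where
  "tv_dist H P Q = Max {\<bar>\<Sum>tau\<in>A. P tau - Q tau\<bar> | A. A \<subseteq> traj_set H}"

text \<open>A policy only matters through its values on histories of length < H; we use canonical
  representatives (values on longer histories fixed) so that the policy set is finite.\<close>
definition canon :: "nat \<Rightarrow> ('o, 'a) policy \<Rightarrow> ('o, 'a) policy" where
  "canon H pol = (\<lambda>hs ob. if length hs < H then pol hs ob else undefined)"

definition Pi_c :: "nat \<Rightarrow> ('o, 'a) policy set" where
  "Pi_c H = range (canon H)"

text \<open>Data of K episodes: list of (policy, trajectory); D_k = take (k-1) hs.\<close>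
definition hist_set :: "nat \<Rightarrow> nat \<Rightarrow> (('o, 'a) policy \<times> ('o \<times> 'a) list) list set" where
  "hist_set H K = {hs. length hs = K \<and> set hs \<subseteq> Pi_c H \<times> traj_set H}"

text \<open>A learning algorithm phi: phi D pol = probability of playing (the class of) pol given data D.
  Expectation over theta^* ~ prior, the algorithm's randomness and the trajectories.\<close>
definition joint_exp ::
  "nat \<Rightarrow> 'p measure \<Rightarrow> ('p \<Rightarrow> ('s::finite, 'a, 'o) pvec) \<Rightarrow>
   ((('o, 'a) policy \<times> ('o \<times> 'a) list) list \<Rightarrow> ('o, 'a) policy \<Rightarrow> real) \<Rightarrow> nat \<Rightarrow>
   ('p \<Rightarrow> (('o, 'a) policy \<times> ('o \<times> 'a) list) list \<Rightarrow> real) \<Rightarrow> real" where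
  "joint_exp H nu1 par phi K F =
     (\<integral>th. (\<Sum>hs\<in>hist_set H K.
        (\<Prod>k<K. phi (take k hs) (fst (hs ! k)) * pr_pi H (par th) (fst (hs ! k)) (snd (hs ! k))) *
        F th hs) \<partial>nu1)"

definition breg ::
  "nat \<Rightarrow> (nat \<Rightarrow> 'o \<Rightarrow> 'a \<Rightarrow> real) \<Rightarrow> 'p measure \<Rightarrow> ('p \<Rightarrow> ('s::finite, 'a, 'o) pvec) \<Rightarrow>
   ((('o, 'a) policy \<times> ('o \<times> 'a) list) list \<Rightarrow> ('o, 'a) policy \<Rightarrow> real) \<Rightarrow> nat \<Rightarrow> real" where
  "breg H r nu1 par phi K =
     joint_exp H nu1 par phi K
       (\<lambda>th hs. \<Sum>k<K. opt_value H r (par th) - value_fn H r (par th) (fst (hs ! k)))"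

definition posterior ::
  "nat \<Rightarrow> 'p measure \<Rightarrow> ('p \<Rightarrow> ('s::finite, 'a, 'o) pvec) \<Rightarrow>
   (('o, 'a) policy \<times> ('o \<times> 'a) list) list \<Rightarrow> 'p measure" where
  "posterior H nu1 par D =
     fold (\<lambda>(pol, tau) nu. density nu
             (\<lambda>th. ennreal (pr_pi H (par th) pol tau / (\<integral>th'. pr_pi H (par th') pol tau \<partial>nu)))) D nu1"

text \<open>PS4POMDPs: sample theta~ ~ nu^k, play planner(theta~) (an exact maximiser of V).\<close>
definition ps_alg ::
  "nat \<Rightarrow> 'p measure \<Rightarrow> ('p \<Rightarrow> ('s::finite, 'a, 'o) pvec) \<Rightarrow> ('p \<Rightarrow> ('o, 'a) policy) \<Rightarrow>
   (('o, 'a) policy \<times> ('o \<times> 'a) list) list \<Rightarrow> ('o, 'a) policy \<Rightarrow> real" where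
  "ps_alg H nu1 par planner D pol =
     measure (posterior H nu1 par D) {th \<in> space nu1. canon H (planner th) = pol}"

text \<open>Log-likelihood with log 0 = -infinity.\<close>
definition loglik :: "nat \<Rightarrow> ('s::finite, 'a, 'o) pvec \<Rightarrow> (('o, 'a) policy \<times> ('o \<times> 'a) list) list \<Rightarrow> ereal" where
  "loglik H v D =
     (if (\<forall>(pol, tau)\<in>set D. 0 < pr_pi H v pol tau)
      then ereal (\<Sum>(pol, tau)\<leftarrow>D. ln (pr_pi H v pol tau)) else -\<infinity>)"

definition conf_set ::
  "nat \<Rightarrow> nat \<Rightarrow> ('s::finite, 'a, 'o) pvec set \<Rightarrow> (('o, 'a) policy \<times> ('o \<times> 'a) list) list \<Rightarrow>
   ('s, 'a, 'o) pvec set" where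
  "conf_set H K Tb D =
     {v \<in> Tb. Max ((\<lambda>w. loglik H w D) ` Tb) - ereal (ln (real K * real (card Tb))) - 1 \<le> loglik H v D}"

end

theory Submission
  imports Defs
begin

text \<open>
  Given the data of the previous episodes, the sampled parameter and the true parameter have the
  same law, namely the posterior. Hence the expected optimal value of the true parameter equals that
  of the sampled one, and the regret of an episode is the expected gap, under the policy played,
  between the values for the sampled and for the true parameter. Replacing the sampled parameter by
  its discretisation \<open>iota\<close> costs at most \<open>H \<cdot> 2H\<epsilon> = H/K\<close>. If the discretised parameter lies
  in the confidence set, the remaining gap is at most \<open>H\<close> times the largest total variation
  distance over the confidence set; otherwise it is at most \<open>H\<close>. Since \<open>(1 + \<epsilon>)^(2HK) \<le> e\<close>,
  the discretisation loses at most a factor \<open>e\<close> of likelihood, so it leaves the confidence set only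
  if some vector of the finite set is \<open>K |Tb|\<close> times more likely than the true parameter; every such
  likelihood ratio has expectation at most one, so by Markov's inequality this has probability at
  most \<open>1/K\<close>. Summing \<open>2H/K\<close> over the \<open>K\<close> episodes gives \<open>2H\<close>.
\<close>

section \<open>Trajectory distributions\<close>

lemma sum_lists_length_Suc:
  "(\<Sum>xs\<in>{xs. length xs = Suc n \<and> set xs \<subseteq> A}. f xs)
     = (\<Sum>xs\<in>{xs. length xs = n \<and> set xs \<subseteq> A}. \<Sum>x\<in>A. f (xs @ [x]))"
proof -
  have "{xs. length xs = Suc n \<and> set xs \<subseteq> A}
          = (\<lambda>(xs, x). xs @ [x]) ` ({xs. length xs = n \<and> set xs \<subseteq> A} \<times> A)"
    by (auto simp: length_Suc_conv_rev image_iff)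
  moreover have "inj_on (\<lambda>(xs, x). xs @ [x]) ({xs. length xs = n \<and> set xs \<subseteq> A} \<times> A)"
    by (auto simp: inj_on_def)
  ultimately show ?thesis
    by (simp add: sum.reindex sum.cartesian_product[of "\<lambda>xs x. f (xs @ [x])"] case_prod_unfold)
qed

lemma sum_lists_length_Suc_UNIV:
  "(\<Sum>xs\<in>{xs::'a list. length xs = Suc n}. f xs) = (\<Sum>xs\<in>{xs. length xs = n}. \<Sum>x\<in>UNIV. f (xs @ [x]))"
  using sum_lists_length_Suc[where A = UNIV] by simp

lemma sum_pairs_graph:
  "(\<Sum>x\<in>(UNIV :: ('b::finite \<times> 'c::finite) set). (if f (fst x) = snd x then 1 else 0) * g (fst x))
     = (\<Sum>y\<in>UNIV. (g y :: real))"
proof -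
  have "(\<Sum>x\<in>(UNIV :: ('b \<times> 'c) set). (if f (fst x) = snd x then 1 else 0) * g (fst x))
          = (\<Sum>y\<in>UNIV. \<Sum>z\<in>UNIV. if f y = z then g y else 0)"
    unfolding UNIV_Times_UNIV[symmetric] sum.cartesian_product' by (intro sum.cong) auto
  then show ?thesis by simp
qed

lemma valid_pvec_nonneg:
  assumes "valid_pvec H v"
  shows "0 \<le> init v s" "0 \<le> trans v h s a s'" "0 \<le> obsv v h s ob"
  using assms unfolding valid_pvec_def
  by (cases "h \<in> {1..<H}"; cases "h \<in> {1..H}"; auto)+

lemma valid_pvec_le_1:
  assumes v: "valid_pvec H v"
  shows "init v s \<le> 1" "trans v h s a s' \<le> 1" "obsv v h s ob \<le> 1"
proof -
  have "init v s \<le> (\<Sum>s\<in>UNIV. init v s)"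
    by (rule member_le_sum) (auto simp: valid_pvec_nonneg[OF v])
  then show "init v s \<le> 1" using v unfolding valid_pvec_def by auto
  have "trans v h s a s' \<le> (\<Sum>s'\<in>UNIV. trans v h s a s')"
    by (rule member_le_sum) (auto simp: valid_pvec_nonneg[OF v])
  then show "trans v h s a s' \<le> 1" using v unfolding valid_pvec_def by (cases "h \<in> {1..<H}") auto
  have "obsv v h s ob \<le> (\<Sum>ob\<in>UNIV. obsv v h s ob)"
    by (rule member_le_sum) (auto simp: valid_pvec_nonneg[OF v])
  then show "obsv v h s ob \<le> 1" using v unfolding valid_pvec_def by (cases "h \<in> {1..H}") auto
qed

definition path_weight :: "nat \<Rightarrow> ('s::finite, 'a, 'o) pvec \<Rightarrow> ('o \<times> 'a) list \<Rightarrow> 's list \<Rightarrow> real" where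
  "path_weight n v tau ss = init v (ss ! 0) * obsv v n (ss ! (n - 1)) (fst (tau ! (n - 1))) *
     (\<Prod>i<n - 1. obsv v (Suc i) (ss ! i) (fst (tau ! i)) * trans v (Suc i) (ss ! i) (snd (tau ! i)) (ss ! Suc i))"

lemma pr_minus_eq_sum_path_weight: "pr_minus H v tau = (\<Sum>ss\<in>{ss. length ss = H}. path_weight H v tau ss)"
  unfolding pr_minus_def path_weight_def ..

lemma path_weight_snoc:
  assumes "length tau = n" "length ss = n" "1 \<le> n"
  shows "path_weight (Suc n) v (tau @ [x]) (ss @ [s'])
           = path_weight n v tau ss * trans v n (ss ! (n - 1)) (snd (tau ! (n - 1))) s' * obsv v (Suc n) s' (fst x)"
proof -
  have n: "n = Suc (n - 1)" using assms(3) by simp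
  have "(\<Prod>i<n. obsv v (Suc i) ((ss @ [s']) ! i) (fst ((tau @ [x]) ! i)) *
                  trans v (Suc i) ((ss @ [s']) ! i) (snd ((tau @ [x]) ! i)) ((ss @ [s']) ! Suc i))
      = (\<Prod>i<n - 1. obsv v (Suc i) (ss ! i) (fst (tau ! i)) * trans v (Suc i) (ss ! i) (snd (tau ! i)) (ss ! Suc i)) *
        (obsv v n (ss ! (n - 1)) (fst (tau ! (n - 1))) * trans v n (ss ! (n - 1)) (snd (tau ! (n - 1))) s')"
    by (subst n, subst prod.lessThan_Suc) (use assms in \<open>auto simp: nth_append intro!: prod.cong\<close>)
  then show ?thesis unfolding path_weight_def using assms by (simp add: nth_append)
qed

lemma pol_prob_snoc:
  assumes "length tau = n"
  shows "pol_prob (Suc n) pol (tau @ [x]) = pol_prob n pol tau * (if pol tau (fst x) = snd x then 1 else 0)"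
proof -
  have "(\<Prod>i<n. if pol (take i (tau @ [x])) (fst ((tau @ [x]) ! i)) = snd ((tau @ [x]) ! i) then 1 else 0)
          = pol_prob n pol tau"
    unfolding pol_prob_def using assms by (intro prod.cong) (auto simp: nth_append)
  then show ?thesis using assms unfolding pol_prob_def by (simp add: nth_append)
qed

lemma sum_path_weight_snoc:
  assumes v: "valid_pvec H v" and tau: "length tau = n" and n: "1 \<le> n" "n < H"
  shows "(\<Sum>x\<in>UNIV. (if pol tau (fst x) = snd x then 1 else 0) *
            (\<Sum>ss\<in>{ss. length ss = Suc n}. path_weight (Suc n) v (tau @ [x]) ss))
         = (\<Sum>ss\<in>{ss::'s::finite list. length ss = n}. path_weight n v tau ss)"
proof -
  define step where "step ss s' ob = trans v n (ss ! (n - 1)) (snd (tau ! (n - 1))) s' * obsv v (Suc n) s' ob"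
    for ss :: "'s list" and s' ob
  have step_total: "(\<Sum>ob\<in>UNIV. \<Sum>s'\<in>UNIV. step ss s' ob) = 1" for ss
  proof -
    have "(\<Sum>ob\<in>UNIV. \<Sum>s'\<in>UNIV. step ss s' ob)
            = (\<Sum>s'\<in>UNIV. trans v n (ss ! (n - 1)) (snd (tau ! (n - 1))) s' * (\<Sum>ob\<in>UNIV. obsv v (Suc n) s' ob))"
      unfolding step_def by (subst sum.swap) (simp add: sum_distrib_left)
    then show ?thesis using v n unfolding valid_pvec_def by simp
  qed
  have last_step: "(\<Sum>ss\<in>{ss. length ss = Suc n}. path_weight (Suc n) v (tau @ [x]) ss)
          = (\<Sum>ss\<in>{ss. length ss = n}. path_weight n v tau ss * (\<Sum>s'\<in>UNIV. step ss s' (fst x)))" for x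
    unfolding sum_lists_length_Suc_UNIV sum_distrib_left step_def
    using tau n by (intro sum.cong refl) (simp add: path_weight_snoc mult.assoc)
  have "(\<Sum>x\<in>UNIV. (if pol tau (fst x) = snd x then 1 else 0) *
              (\<Sum>ss\<in>{ss. length ss = Suc n}. path_weight (Suc n) v (tau @ [x]) ss))
      = (\<Sum>ob\<in>UNIV. \<Sum>ss\<in>{ss::'s list. length ss = n}. path_weight n v tau ss * (\<Sum>s'\<in>UNIV. step ss s' ob))"
    unfolding last_step by (rule sum_pairs_graph)
  also have "\<dots> = (\<Sum>ss\<in>{ss::'s list. length ss = n}. path_weight n v tau ss * (\<Sum>ob\<in>UNIV. \<Sum>s'\<in>UNIV. step ss s' ob))"
    by (subst sum.swap) (simp add: sum_distrib_left)
  finally show ?thesis by (simp add: step_total)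
qed

lemma sum_prefix_prob:
  assumes v: "valid_pvec H v" and n: "1 \<le> n" "n \<le> H"
  shows "(\<Sum>tau\<in>{tau::('o::finite \<times> 'a::finite) list. length tau = n}.
            pol_prob n pol tau * (\<Sum>ss\<in>{ss::'s::finite list. length ss = n}. path_weight n v tau ss)) = 1"
  using n
proof (induction n rule: dec_induct)
  case base
  have singletons: "(\<Sum>xs\<in>{xs::'b list. length xs = 1}. f xs) = (\<Sum>x\<in>UNIV. f [x])"
    for f :: "'b::finite list \<Rightarrow> real"
    using sum_lists_length_Suc_UNIV[where n = 0 and f = f] by simp
  have "(\<Sum>tau\<in>{tau::('o \<times> 'a) list. length tau = 1}.
            pol_prob 1 pol tau * (\<Sum>ss\<in>{ss::'s list. length ss = 1}. path_weight 1 v tau ss))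
      = (\<Sum>x\<in>UNIV. (if pol [] (fst x) = snd x then 1 else 0) * (\<Sum>s\<in>UNIV. init v s * obsv v 1 s (fst x)))"
    unfolding singletons by (simp add: pol_prob_def path_weight_def)
  also have "\<dots> = (\<Sum>ob\<in>UNIV. \<Sum>s\<in>UNIV. init v s * obsv v 1 s ob)"
    by (rule sum_pairs_graph)
  also have "\<dots> = (\<Sum>s\<in>UNIV. init v s * (\<Sum>ob\<in>UNIV. obsv v 1 s ob))"
    by (subst sum.swap) (simp add: sum_distrib_left)
  also have "\<dots> = 1" using v base unfolding valid_pvec_def by simp
  finally show ?case .
next
  case (step n)
  have "(\<Sum>tau\<in>{tau::('o \<times> 'a) list. length tau = Suc n}.
            pol_prob (Suc n) pol tau * (\<Sum>ss\<in>{ss::'s list. length ss = Suc n}. path_weight (Suc n) v tau ss))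
      = (\<Sum>tau\<in>{tau::('o \<times> 'a) list. length tau = n}. pol_prob n pol tau *
           (\<Sum>x\<in>UNIV. (if pol tau (fst x) = snd x then 1 else 0) *
              (\<Sum>ss\<in>{ss::'s list. length ss = Suc n}. path_weight (Suc n) v (tau @ [x]) ss)))"
    unfolding sum_lists_length_Suc_UNIV[where n = n] sum_distrib_left
    by (intro sum.cong refl) (simp add: pol_prob_snoc mult.assoc)
  also have "\<dots> = 1"
    using step by (simp add: sum_path_weight_snoc[OF v])
  finally show ?case .
qed

lemma sum_pr_pi: "valid_pvec H v \<Longrightarrow> 1 \<le> H \<Longrightarrow> (\<Sum>tau\<in>traj_set H. pr_pi H v pol tau) = 1"
  using sum_prefix_prob[of H v H pol]
  unfolding traj_set_def pr_pi_def pr_minus_eq_sum_path_weight by simp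

lemma pol_prob_nonneg: "0 \<le> pol_prob n pol tau"
  unfolding pol_prob_def by (intro prod_nonneg) auto

lemma pol_prob_le_1: "pol_prob n pol tau \<le> 1"
  unfolding pol_prob_def by (intro prod_le_1) auto

lemma path_weight_nonneg: "valid_pvec H v \<Longrightarrow> 0 \<le> path_weight n v tau ss"
  unfolding path_weight_def by (intro mult_nonneg_nonneg prod_nonneg) (auto simp: valid_pvec_nonneg)

lemma path_weight_le_1: "valid_pvec H v \<Longrightarrow> path_weight n v tau ss \<le> 1"
  unfolding path_weight_def
  by (intro mult_le_one prod_le_1 conjI mult_nonneg_nonneg prod_nonneg)
     (auto simp: valid_pvec_nonneg valid_pvec_le_1)

lemma pr_minus_nonneg: "valid_pvec H v \<Longrightarrow> 0 \<le> pr_minus H v tau"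
  unfolding pr_minus_eq_sum_path_weight by (intro sum_nonneg path_weight_nonneg)

lemma pr_pi_nonneg: "valid_pvec H v \<Longrightarrow> 0 \<le> pr_pi H v pol tau"
  unfolding pr_pi_def by (simp add: pr_minus_nonneg pol_prob_nonneg)

lemma pr_pi_le_card_state_seqs:
  fixes v :: "('s::finite, 'a::finite, 'o::finite) pvec"
  assumes v: "valid_pvec H v"
  shows "pr_pi H v pol tau \<le> real (card {ss::'s::finite list. length ss = H})"
proof -
  have "pr_pi H v pol tau \<le> pr_minus H v tau"
    unfolding pr_pi_def by (intro mult_left_le_one_le pr_minus_nonneg[OF v] pol_prob_nonneg pol_prob_le_1)
  also have "\<dots> \<le> (\<Sum>ss\<in>{ss::'s list. length ss = H}. 1)"
    unfolding pr_minus_eq_sum_path_weight by (intro sum_mono path_weight_le_1[OF v])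
  finally show ?thesis by simp
qed

lemma finite_traj_set: "finite (traj_set H :: ('o::finite \<times> 'a::finite) list set)"
  unfolding traj_set_def using finite_lists_length_eq[of "UNIV :: ('o \<times> 'a) set" H] by simp

lemma pr_pi_canon: "pr_pi H v (canon H pol) = pr_pi H v pol"
  unfolding pr_pi_def pol_prob_def canon_def by (intro ext arg_cong2[where f = "(*)"] prod.cong) auto

lemma value_fn_canon: "value_fn H r v (canon H pol) = value_fn H r v pol"
  unfolding value_fn_def by (simp add: pr_pi_canon)

section \<open>Total variation and values\<close>

lemma tv_dist_eq_Max_image:
  "tv_dist H P Q = Max ((\<lambda>A. \<bar>\<Sum>tau\<in>A. P tau - Q tau\<bar>) ` Pow (traj_set H))"
proof -
  have "{\<bar>\<Sum>tau\<in>A. P tau - Q tau\<bar> | A. A \<subseteq> traj_set H} = (\<lambda>A. \<bar>\<Sum>tau\<in>A. P tau - Q tau\<bar>) ` Pow (traj_set H)"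
    by auto
  then show ?thesis unfolding tv_dist_def by simp
qed

lemma abs_sum_le_tv_dist:
  fixes P Q :: "('o::finite \<times> 'a::finite) list \<Rightarrow> real"
  shows "A \<subseteq> traj_set H \<Longrightarrow> \<bar>\<Sum>tau\<in>A. P tau - Q tau\<bar> \<le> tv_dist H P Q"
  unfolding tv_dist_eq_Max_image by (rule Max_ge) (auto simp: finite_traj_set)

lemma tv_dist_nonneg:
  fixes P Q :: "('o::finite \<times> 'a::finite) list \<Rightarrow> real"
  shows "0 \<le> tv_dist H P Q"
  using abs_sum_le_tv_dist[of "{}" H P Q] by simp

lemma tv_dist_commute:
  fixes P Q :: "('o::finite \<times> 'a::finite) list \<Rightarrow> real"
  shows "tv_dist H P Q = tv_dist H Q P"
proof -
  have "\<bar>\<Sum>tau\<in>A. P tau - Q tau\<bar> = \<bar>\<Sum>tau\<in>A. Q tau - P tau\<bar>" for A :: "('o \<times> 'a) list set"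
    by (simp add: sum_subtractf)
  then show ?thesis unfolding tv_dist_eq_Max_image by simp
qed

lemma tv_dist_le_sum_abs:
  fixes P Q :: "('o::finite \<times> 'a::finite) list \<Rightarrow> real"
  shows "tv_dist H P Q \<le> (\<Sum>tau\<in>traj_set H. \<bar>P tau - Q tau\<bar>)"
  unfolding tv_dist_eq_Max_image
proof (rule Max.boundedI)
  fix x assume "x \<in> (\<lambda>A. \<bar>\<Sum>tau\<in>A. P tau - Q tau\<bar>) ` Pow (traj_set H)"
  then obtain A where A: "A \<subseteq> traj_set H" "x = \<bar>\<Sum>tau\<in>A. P tau - Q tau\<bar>" by auto
  have "x \<le> (\<Sum>tau\<in>A. \<bar>P tau - Q tau\<bar>)" using A(2) by simp
  also have "\<dots> \<le> (\<Sum>tau\<in>traj_set H. \<bar>P tau - Q tau\<bar>)"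
    by (rule sum_mono2) (use A(1) finite_traj_set in auto)
  finally show "x \<le> (\<Sum>tau\<in>traj_set H. \<bar>P tau - Q tau\<bar>)" .
qed (auto simp: finite_traj_set)

lemma tv_dist_pr_pi_le_2:
  assumes "valid_pvec H v" "valid_pvec H w" "1 \<le> H"
  shows "tv_dist H (pr_pi H v pol) (pr_pi H w pol) \<le> 2"
proof -
  have "tv_dist H (pr_pi H v pol) (pr_pi H w pol) \<le> (\<Sum>tau\<in>traj_set H. \<bar>pr_pi H v pol tau - pr_pi H w pol tau\<bar>)"
    by (rule tv_dist_le_sum_abs)
  also have "\<dots> \<le> (\<Sum>tau\<in>traj_set H. pr_pi H v pol tau + pr_pi H w pol tau)"
    using pr_pi_nonneg[OF assms(1)] pr_pi_nonneg[OF assms(2)]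
    by (intro sum_mono) (simp add: abs_le_iff add_increasing add_increasing2)
  also have "\<dots> = 2" using sum_pr_pi[OF assms(1,3)] sum_pr_pi[OF assms(2,3)] by (simp add: sum.distrib)
  finally show ?thesis .
qed

text \<open>Only the set where \<open>P \<ge> Q\<close> contributes to the left-hand side.\<close>
lemma sum_diff_mult_le_tv_dist:
  fixes P Q R :: "('o::finite \<times> 'a::finite) list \<Rightarrow> real"
  assumes R: "\<And>tau. tau \<in> traj_set H \<Longrightarrow> 0 \<le> R tau \<and> R tau \<le> c" and c: "0 \<le> c"
  shows "(\<Sum>tau\<in>traj_set H. (P tau - Q tau) * R tau) \<le> c * tv_dist H P Q"
proof -
  define A where "A = {tau \<in> traj_set H. Q tau \<le> P tau}"
  have A: "A \<subseteq> traj_set H" unfolding A_def by auto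
  have "(\<Sum>tau\<in>traj_set H. (P tau - Q tau) * R tau)
          = (\<Sum>tau\<in>A. (P tau - Q tau) * R tau) + (\<Sum>tau\<in>traj_set H - A. (P tau - Q tau) * R tau)"
    using A finite_traj_set by (metis (no_types, lifting) add.commute sum.subset_diff)
  also have "(\<Sum>tau\<in>traj_set H - A. (P tau - Q tau) * R tau) \<le> 0"
    by (intro sum_nonpos mult_nonpos_nonneg) (auto simp: A_def R)
  also have "(\<Sum>tau\<in>A. (P tau - Q tau) * R tau) \<le> (\<Sum>tau\<in>A. (P tau - Q tau) * c)"
    by (intro sum_mono mult_left_mono) (auto simp: A_def R)
  also have "\<dots> = c * (\<Sum>tau\<in>A. P tau - Q tau)"
    by (simp add: sum_distrib_left mult.commute)
  also have "\<dots> \<le> c * tv_dist H P Q"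
    using abs_sum_le_tv_dist[OF A, of P Q] c by (intro mult_left_mono) auto
  finally show ?thesis by simp
qed

definition traj_reward :: "nat \<Rightarrow> (nat \<Rightarrow> 'o \<Rightarrow> 'a \<Rightarrow> real) \<Rightarrow> ('o \<times> 'a) list \<Rightarrow> real" where
  "traj_reward H r tau = (\<Sum>i<H. r (Suc i) (fst (tau ! i)) (snd (tau ! i)))"

lemma value_fn_eq_sum_traj_reward: "value_fn H r v pol = (\<Sum>tau\<in>traj_set H. pr_pi H v pol tau * traj_reward H r tau)"
  unfolding value_fn_def traj_reward_def ..

lemma traj_reward_bounds:
  assumes "\<forall>h\<in>{1..H}. \<forall>ob a. 0 \<le> r h ob a \<and> r h ob a \<le> 1"
  shows "0 \<le> traj_reward H r tau" "traj_reward H r tau \<le> real H"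
proof -
  show "0 \<le> traj_reward H r tau" unfolding traj_reward_def using assms by (intro sum_nonneg) auto
  have "traj_reward H r tau \<le> (\<Sum>i<H. 1)" unfolding traj_reward_def using assms by (intro sum_mono) auto
  then show "traj_reward H r tau \<le> real H" by simp
qed

lemma value_fn_diff_le_tv_dist:
  fixes v w :: "('s::finite, 'a::finite, 'o::finite) pvec"
  assumes "\<forall>h\<in>{1..H}. \<forall>ob a. 0 \<le> r h ob a \<and> r h ob a \<le> 1"
  shows "value_fn H r v pol - value_fn H r w pol \<le> real H * tv_dist H (pr_pi H v pol) (pr_pi H w pol)"
proof -
  have "value_fn H r v pol - value_fn H r w pol
          = (\<Sum>tau\<in>traj_set H. (pr_pi H v pol tau - pr_pi H w pol tau) * traj_reward H r tau)"
    unfolding value_fn_eq_sum_traj_reward by (simp add: sum_subtractf left_diff_distrib)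
  also have "\<dots> \<le> real H * tv_dist H (pr_pi H v pol) (pr_pi H w pol)"
    by (rule sum_diff_mult_le_tv_dist) (use traj_reward_bounds[OF assms] in auto)
  finally show ?thesis .
qed

lemma value_fn_bounds:
  fixes v :: "('s::finite, 'a::finite, 'o::finite) pvec"
  assumes "\<forall>h\<in>{1..H}. \<forall>ob a. 0 \<le> r h ob a \<and> r h ob a \<le> 1" "valid_pvec H v" "1 \<le> H"
  shows "0 \<le> value_fn H r v pol" "value_fn H r v pol \<le> real H"
proof -
  show "0 \<le> value_fn H r v pol" unfolding value_fn_eq_sum_traj_reward
    by (intro sum_nonneg mult_nonneg_nonneg pr_pi_nonneg assms traj_reward_bounds(1))
  have "value_fn H r v pol \<le> (\<Sum>tau\<in>traj_set H. pr_pi H v pol tau * real H)"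
    unfolding value_fn_eq_sum_traj_reward
    by (intro sum_mono mult_left_mono pr_pi_nonneg assms traj_reward_bounds(2))
  also have "\<dots> = real H" using sum_pr_pi[OF assms(2,3)] by (simp add: sum_distrib_right[symmetric])
  finally show "value_fn H r v pol \<le> real H" .
qed

section \<open>Policies, data and likelihoods\<close>

type_synonym ('o, 'a) data = "(('o, 'a) policy \<times> ('o \<times> 'a) list) list"

lemma canon_in_Pi_c: "canon H pol \<in> Pi_c H"
  unfolding Pi_c_def by auto

lemma finite_Pi_c: "finite (Pi_c H :: ('o::finite, 'a::finite) policy set)"
proof -
  define Hs where "Hs = {hs::('o \<times> 'a) list. length hs \<le> H}"
  define extend where "extend f = (\<lambda>hs ob. if length hs < H then f (hs, ob) else undefined)"
    for f :: "('o \<times> 'a) list \<times> 'o \<Rightarrow> 'a"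
  have "finite (PiE (Hs \<times> (UNIV :: 'o set)) (\<lambda>_. UNIV :: 'a set))"
    unfolding Hs_def using finite_lists_length_le[of "UNIV :: ('o \<times> 'a) set" H]
    by (intro finite_PiE finite_cartesian_product) auto
  moreover have "Pi_c H \<subseteq> extend ` PiE (Hs \<times> (UNIV :: 'o set)) (\<lambda>_. UNIV)"
  proof
    fix p :: "('o, 'a) policy" assume "p \<in> Pi_c H"
    then obtain pol where p: "p = canon H pol" unfolding Pi_c_def by auto
    have "p = extend (restrict (\<lambda>(hs, ob). pol hs ob) (Hs \<times> (UNIV :: 'o set)))"
      unfolding p canon_def extend_def Hs_def by (intro ext) auto
    then show "p \<in> extend ` PiE (Hs \<times> (UNIV :: 'o set)) (\<lambda>_. UNIV)" by auto
  qed
  ultimately show ?thesis by (rule finite_surj)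
qed

lemma hist_set_0: "hist_set H 0 = {[]}"
  unfolding hist_set_def by auto

lemma sum_hist_set_Suc:
  "(\<Sum>hs\<in>hist_set H (Suc n). f hs) = (\<Sum>hs\<in>hist_set H n. \<Sum>x\<in>Pi_c H \<times> traj_set H. f (hs @ [x]))"
  unfolding hist_set_def by (rule sum_lists_length_Suc)

lemma length_hist_set: "hs \<in> hist_set H n \<Longrightarrow> length hs = n"
  unfolding hist_set_def by auto

lemma hist_set_nth_traj_set: "hs \<in> hist_set H n \<Longrightarrow> j < length hs \<Longrightarrow> snd (hs ! j) \<in> traj_set H"
  unfolding hist_set_def by (auto dest!: nth_mem)

definition hist_lik :: "nat \<Rightarrow> ('s::finite, 'a, 'o) pvec \<Rightarrow> ('o, 'a) data \<Rightarrow> real" where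
  "hist_lik H v D = (\<Prod>j<length D. pr_pi H v (fst (D ! j)) (snd (D ! j)))"

lemma hist_lik_nonneg: "valid_pvec H v \<Longrightarrow> 0 \<le> hist_lik H v D"
  unfolding hist_lik_def by (intro prod_nonneg pr_pi_nonneg) auto

lemma hist_lik_Nil [simp]: "hist_lik H v [] = 1"
  unfolding hist_lik_def by simp

lemma hist_lik_snoc: "hist_lik H v (D @ [x]) = hist_lik H v D * pr_pi H v (fst x) (snd x)"
  unfolding hist_lik_def by (simp add: nth_append)

lemma loglik_eq_ln_hist_lik:
  assumes v: "valid_pvec H v"
  shows "loglik H v D = (if 0 < hist_lik H v D then ereal (ln (hist_lik H v D)) else -\<infinity>)"
proof (cases "\<forall>j<length D. 0 < pr_pi H v (fst (D ! j)) (snd (D ! j))")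
  case True
  then have pos: "0 < hist_lik H v D" unfolding hist_lik_def by (intro prod_pos) auto
  have "(\<Sum>(pol, tau)\<leftarrow>D. ln (pr_pi H v pol tau)) = (\<Sum>j<length D. ln (pr_pi H v (fst (D ! j)) (snd (D ! j))))"
    by (simp add: sum_list_sum_nth case_prod_beta atLeast0LessThan)
  also have "\<dots> = ln (hist_lik H v D)"
    unfolding hist_lik_def using True by (subst ln_prod) auto
  finally show ?thesis
    unfolding loglik_def using True pos by (simp add: all_set_conv_all_nth split_def)
next
  case False
  then obtain j where j: "j < length D" "\<not> 0 < pr_pi H v (fst (D ! j)) (snd (D ! j))" by auto
  then have "pr_pi H v (fst (D ! j)) (snd (D ! j)) = 0"
    using pr_pi_nonneg[OF v, of "fst (D ! j)" "snd (D ! j)"] by linarith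
  then have "hist_lik H v D = 0" unfolding hist_lik_def using j(1) by (intro prod_zero) auto
  then show ?thesis
    unfolding loglik_def using False by (simp add: all_set_conv_all_nth split_def)
qed

section \<open>Posterior sampling\<close>

locale posterior_sampling =
  fixes H :: nat
    and r :: "nat \<Rightarrow> 'o::finite \<Rightarrow> 'a::finite \<Rightarrow> real"
    and nu1 :: "'p measure"
    and par :: "'p \<Rightarrow> ('s::finite, 'a, 'o) pvec"
    and planner :: "'p \<Rightarrow> ('o, 'a) policy"
  assumes H: "1 \<le> H"
    and rew: "\<forall>h\<in>{1..H}. \<forall>ob a. 0 \<le> r h ob a \<and> r h ob a \<le> 1"
    and prior: "prob_space nu1"
    and par_valid: "\<forall>th\<in>space nu1. valid_pvec H (par th)"
    and par_meas_b: "\<forall>s. (\<lambda>th. init (par th) s) \<in> borel_measurable nu1"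
    and par_meas_T: "\<forall>h\<in>{1..<H}. \<forall>s a s'. (\<lambda>th. trans (par th) h s a s') \<in> borel_measurable nu1"
    and par_meas_Z: "\<forall>h\<in>{1..H}. \<forall>s ob. (\<lambda>th. obsv (par th) h s ob) \<in> borel_measurable nu1"
    and planner_opt: "\<forall>th\<in>space nu1. \<forall>pol. value_fn H r (par th) pol \<le> value_fn H r (par th) (planner th)"
    and planner_meas: "\<forall>pol. {th \<in> space nu1. canon H (planner th) = pol} \<in> sets nu1"
begin

sublocale prob_space nu1 by (rule prior)

definition bounded_rv :: "('p \<Rightarrow> real) \<Rightarrow> bool" where
  "bounded_rv f \<longleftrightarrow> f \<in> borel_measurable nu1 \<and> (\<exists>B. \<forall>x\<in>space nu1. \<bar>f x\<bar> \<le> B)"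

lemma bounded_rv_integrable: "bounded_rv f \<Longrightarrow> integrable nu1 f"
  unfolding bounded_rv_def by (elim conjE exE, rule integrable_const_bound) auto

lemma bounded_rv_measurable: "bounded_rv f \<Longrightarrow> f \<in> borel_measurable nu1"
  unfolding bounded_rv_def by auto

lemma bounded_rv_const [simp]: "bounded_rv (\<lambda>x. c)"
  unfolding bounded_rv_def by auto

lemma bounded_rv_indicator: "A \<in> sets nu1 \<Longrightarrow> bounded_rv (indicator A)"
  unfolding bounded_rv_def by (auto intro!: exI[of _ 1] simp: indicator_def)

lemma bounded_rv_add: "bounded_rv f \<Longrightarrow> bounded_rv g \<Longrightarrow> bounded_rv (\<lambda>x. f x + g x)"
  unfolding bounded_rv_def
  by (auto intro!: exI[of _ "_ + _"] intro: order.trans[OF abs_triangle_ineq] add_mono)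

lemma bounded_rv_diff: "bounded_rv f \<Longrightarrow> bounded_rv g \<Longrightarrow> bounded_rv (\<lambda>x. f x - g x)"
  unfolding bounded_rv_def
  by (auto intro!: exI[of _ "_ + _"] intro: order.trans[OF abs_triangle_ineq4] add_mono)

lemma bounded_rv_mult: "bounded_rv f \<Longrightarrow> bounded_rv g \<Longrightarrow> bounded_rv (\<lambda>x. f x * g x)"
  unfolding bounded_rv_def
proof (elim conjE exE, intro conjI)
  fix B1 B2 assume b1: "\<forall>x\<in>space nu1. \<bar>f x\<bar> \<le> B1" and b2: "\<forall>x\<in>space nu1. \<bar>g x\<bar> \<le> B2"
  show "\<exists>B. \<forall>x\<in>space nu1. \<bar>f x * g x\<bar> \<le> B"
  proof (intro exI[of _ "B1 * B2"] ballI)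
    fix x assume "x \<in> space nu1"
    then have "\<bar>f x\<bar> \<le> B1" "\<bar>g x\<bar> \<le> B2" using b1 b2 by auto
    then show "\<bar>f x * g x\<bar> \<le> B1 * B2" unfolding abs_mult by (intro mult_mono) auto
  qed
qed auto

lemma bounded_rv_sum: "(\<And>i. i \<in> I \<Longrightarrow> bounded_rv (f i)) \<Longrightarrow> bounded_rv (\<lambda>x. \<Sum>i\<in>I. f i x)"
  by (induction I rule: infinite_finite_induct) (auto intro: bounded_rv_add)

lemma bounded_rv_prod: "(\<And>i. i \<in> I \<Longrightarrow> bounded_rv (f i)) \<Longrightarrow> bounded_rv (\<lambda>x. \<Prod>i\<in>I. f i x)"
  by (induction I rule: infinite_finite_induct) (auto intro: bounded_rv_mult)

lemma bounded_rv_cong: "(\<And>x. x \<in> space nu1 \<Longrightarrow> f x = g x) \<Longrightarrow> bounded_rv f \<Longrightarrow> bounded_rv g"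
  unfolding bounded_rv_def using measurable_cong[of nu1 f g] by auto

lemma valid_par: "th \<in> space nu1 \<Longrightarrow> valid_pvec H (par th)"
  using par_valid by auto

lemma measurable_pr_minus: "(\<lambda>th. pr_minus H (par th) tau) \<in> borel_measurable nu1"
  unfolding pr_minus_def
proof (intro borel_measurable_sum borel_measurable_times borel_measurable_prod)
  fix ss :: "'s list" and i
  show "(\<lambda>th. init (par th) (ss ! 0)) \<in> borel_measurable nu1" using par_meas_b by auto
  show "(\<lambda>th. obsv (par th) H (ss ! (H - 1)) (fst (tau ! (H - 1)))) \<in> borel_measurable nu1"
    using par_meas_Z H by auto
  assume i: "i \<in> {..<H - 1}"
  show "(\<lambda>th. obsv (par th) (Suc i) (ss ! i) (fst (tau ! i))) \<in> borel_measurable nu1"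
    using par_meas_Z i by auto
  show "(\<lambda>th. trans (par th) (Suc i) (ss ! i) (snd (tau ! i)) (ss ! Suc i)) \<in> borel_measurable nu1"
    using par_meas_T i by auto
qed

lemma bounded_rv_pr_pi: "bounded_rv (\<lambda>th. pr_pi H (par th) pol tau)"
  unfolding bounded_rv_def
proof (intro conjI exI ballI)
  show "(\<lambda>th. pr_pi H (par th) pol tau) \<in> borel_measurable nu1"
    unfolding pr_pi_def using measurable_pr_minus by simp
  fix th assume "th \<in> space nu1"
  then show "\<bar>pr_pi H (par th) pol tau\<bar> \<le> real (card {ss::'s list. length ss = H})"
    using pr_pi_le_card_state_seqs[OF valid_par] pr_pi_nonneg[OF valid_par] by auto
qed

abbreviation lik :: "'p \<Rightarrow> ('o, 'a) data \<Rightarrow> real" where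
  "lik th D \<equiv> hist_lik H (par th) D"

definition evidence :: "('o, 'a) data \<Rightarrow> real" where
  "evidence D = (\<integral>th. lik th D \<partial>nu1)"

lemma bounded_rv_lik: "bounded_rv (\<lambda>th. lik th D)"
  unfolding hist_lik_def by (intro bounded_rv_prod bounded_rv_pr_pi)

lemma lik_nonneg: "th \<in> space nu1 \<Longrightarrow> 0 \<le> lik th D"
  using hist_lik_nonneg[OF valid_par] .

lemma evidence_nonneg: "0 \<le> evidence D"
  unfolding evidence_def by (intro integral_nonneg_AE AE_I2 lik_nonneg)

lemma integral_lik_mult_evidence_0:
  assumes "evidence D = 0"
  shows "(\<integral>th. lik th D * g th \<partial>nu1) = 0"
proof (rule integral_eq_zero_AE)
  have "AE th in nu1. lik th D = 0"
    using assms unfolding evidence_def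
    by (subst integral_nonneg_eq_0_iff_AE[symmetric])
       (auto intro: bounded_rv_integrable[OF bounded_rv_lik] lik_nonneg)
  then show "AE th in nu1. lik th D * g th = 0" by eventually_elim simp
qed

lemma evidence_Nil: "evidence [] = 1"
  unfolding evidence_def by (simp add: prob_space)

lemma evidence_snoc_eq_0: "evidence D = 0 \<Longrightarrow> evidence (D @ [x]) = 0"
  using integral_lik_mult_evidence_0[of D "\<lambda>th. pr_pi H (par th) (fst x) (snd x)"]
  unfolding evidence_def hist_lik_snoc by simp

lemma integral_pr_pi_density_lik:
  "(\<integral>th. pr_pi H (par th) pol tau \<partial>density nu1 (\<lambda>th. ennreal (lik th D / evidence D)))
     = evidence (D @ [(pol, tau)]) / evidence D"
proof -
  have "(\<integral>th. pr_pi H (par th) pol tau \<partial>density nu1 (\<lambda>th. ennreal (lik th D / evidence D)))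
          = (\<integral>th. lik th D / evidence D * pr_pi H (par th) pol tau \<partial>nu1)"
    using bounded_rv_measurable[OF bounded_rv_lik] bounded_rv_measurable[OF bounded_rv_pr_pi]
    by (subst integral_density) (auto intro!: divide_nonneg_nonneg lik_nonneg evidence_nonneg)
  then show ?thesis unfolding evidence_def by (simp add: hist_lik_snoc)
qed

lemma lik_snoc_div_evidence:
  "lik th D / evidence D * (pr_pi H (par th) pol tau / (evidence (D @ [(pol, tau)]) / evidence D))
     = lik th (D @ [(pol, tau)]) / evidence (D @ [(pol, tau)])"
proof (cases "evidence D = 0")
  case True
  then show ?thesis using evidence_snoc_eq_0 by simp
next
  case False
  then show ?thesis by (cases "evidence (D @ [(pol, tau)]) = 0") (simp_all add: hist_lik_snoc)
qed

lemma posterior_eq_density: "posterior H nu1 par D = density nu1 (\<lambda>th. ennreal (lik th D / evidence D))"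
proof (induction D rule: rev_induct)
  case Nil
  show ?case unfolding posterior_def by (simp add: evidence_Nil density_1)
next
  case (snoc x D)
  obtain pol tau where x: "x = (pol, tau)" by (cases x)
  define c where "c = evidence (D @ [x]) / evidence D"
  have [measurable]: "(\<lambda>th. lik th D) \<in> borel_measurable nu1" "(\<lambda>th. lik th (D @ [x])) \<in> borel_measurable nu1"
    "(\<lambda>th. pr_pi H (par th) pol tau) \<in> borel_measurable nu1"
    by (intro bounded_rv_measurable bounded_rv_lik bounded_rv_pr_pi)+
  have "posterior H nu1 par (D @ [x])
          = density (density nu1 (\<lambda>th. ennreal (lik th D / evidence D))) (\<lambda>th. ennreal (pr_pi H (par th) pol tau / c))"
    using snoc.IH unfolding posterior_def x c_def by (simp add: integral_pr_pi_density_lik)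
  also have "\<dots> = density nu1 (\<lambda>th. ennreal (lik th D / evidence D) * ennreal (pr_pi H (par th) pol tau / c))"
    by (rule density_density_eq) measurable
  also have "\<dots> = density nu1 (\<lambda>th. ennreal (lik th (D @ [x]) / evidence (D @ [x])))"
  proof (rule density_cong)
    show "AE th in nu1. ennreal (lik th D / evidence D) * ennreal (pr_pi H (par th) pol tau / c)
            = ennreal (lik th (D @ [x]) / evidence (D @ [x]))"
    proof (rule AE_I2)
      fix th assume th: "th \<in> space nu1"
      have "0 \<le> c" unfolding c_def by (intro divide_nonneg_nonneg evidence_nonneg)
      then show "ennreal (lik th D / evidence D) * ennreal (pr_pi H (par th) pol tau / c)
                   = ennreal (lik th (D @ [x]) / evidence (D @ [x]))"
        using lik_nonneg[OF th] evidence_nonneg pr_pi_nonneg[OF valid_par[OF th]]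
        unfolding x c_def lik_snoc_div_evidence[symmetric]
        by (intro ennreal_mult[symmetric] divide_nonneg_nonneg)
    qed
  qed measurable
  finally show ?case .
qed

definition sampled :: "('o, 'a) policy \<Rightarrow> 'p set" where
  "sampled pol = {th \<in> space nu1. canon H (planner th) = pol}"

lemma sets_sampled [measurable]: "sampled pol \<in> sets nu1"
  unfolding sampled_def using planner_meas by auto

lemma sum_indicator_sampled:
  assumes th: "th \<in> space nu1"
  shows "(\<Sum>pol\<in>Pi_c H. indicator (sampled pol) th * f pol) = (f (canon H (planner th)) :: real)"
proof -
  have "(\<Sum>pol\<in>Pi_c H. indicator (sampled pol) th * f pol) = (\<Sum>pol\<in>Pi_c H. if canon H (planner th) = pol then f pol else 0)"
    using th by (intro sum.cong) (auto simp: sampled_def indicator_def)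
  then show ?thesis by (simp add: sum.delta'[OF finite_Pi_c] canon_in_Pi_c)
qed

abbreviation alg :: "('o, 'a) data \<Rightarrow> ('o, 'a) policy \<Rightarrow> real" where
  "alg \<equiv> ps_alg H nu1 par planner"

lemma ps_alg_eq: "alg D pol = (\<integral>th. indicator (sampled pol) th * lik th D \<partial>nu1) / evidence D"
proof -
  have "alg D pol = measure (density nu1 (\<lambda>th. ennreal (lik th D / evidence D))) (sampled pol)"
    unfolding ps_alg_def posterior_eq_density sampled_def ..
  also have "\<dots> = integral\<^sup>L (density nu1 (\<lambda>th. ennreal (lik th D / evidence D))) (indicator (sampled pol))"
    using sets.sets_into_space[OF sets_sampled] by (simp add: Int_absorb2)
  also have "\<dots> = (\<integral>th. lik th D / evidence D * indicator (sampled pol) th \<partial>nu1)"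
    using bounded_rv_measurable[OF bounded_rv_lik]
    by (subst integral_density) (auto intro!: divide_nonneg_nonneg lik_nonneg evidence_nonneg)
  finally show ?thesis by (simp add: mult.commute)
qed

lemma ps_alg_nonneg: "0 \<le> alg D pol"
  unfolding ps_alg_def by simp

text \<open>Data of prior probability zero make the posterior, and with it \<open>alg D\<close>, vanish.\<close>
lemma sum_ps_alg: "(\<Sum>pol\<in>Pi_c H. alg D pol) = (if evidence D = 0 then 0 else 1)"
proof -
  have "(\<Sum>pol\<in>Pi_c H. (\<integral>th. indicator (sampled pol) th * lik th D \<partial>nu1))
          = (\<integral>th. (\<Sum>pol\<in>Pi_c H. indicator (sampled pol) th * lik th D) \<partial>nu1)"
    by (rule Bochner_Integration.integral_sum[symmetric])
       (intro bounded_rv_integrable bounded_rv_mult bounded_rv_indicator sets_sampled bounded_rv_lik)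
  also have "\<dots> = evidence D"
    unfolding evidence_def by (intro Bochner_Integration.integral_cong refl) (simp add: sum_indicator_sampled)
  finally show ?thesis unfolding ps_alg_eq sum_divide_distrib[symmetric] by simp
qed

definition alg_weight :: "('o, 'a) data \<Rightarrow> real" where
  "alg_weight D = (\<Prod>j<length D. alg (take j D) (fst (D ! j)))"

lemma alg_weight_nonneg: "0 \<le> alg_weight D"
  unfolding alg_weight_def by (intro prod_nonneg ps_alg_nonneg)

lemma alg_weight_snoc: "alg_weight (D @ [x]) = alg_weight D * alg D (fst x)"
proof -
  have "(\<Prod>j<length D. alg (take j (D @ [x])) (fst ((D @ [x]) ! j))) = alg_weight D"
    unfolding alg_weight_def by (intro prod.cong) (auto simp: nth_append)
  then show ?thesis unfolding alg_weight_def by simp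
qed

lemma joint_exp_eq:
  "joint_exp H nu1 par alg K F = (\<integral>th. (\<Sum>hs\<in>hist_set H K. alg_weight hs * (lik th hs * F th hs)) \<partial>nu1)"
  unfolding joint_exp_def
proof (intro Bochner_Integration.integral_cong refl sum.cong)
  fix th and hs :: "('o, 'a) data" assume "hs \<in> hist_set H K"
  then have "(\<Prod>k<K. alg (take k hs) (fst (hs ! k)) * pr_pi H (par th) (fst (hs ! k)) (snd (hs ! k)))
               = alg_weight hs * lik th hs"
    unfolding alg_weight_def hist_lik_def by (simp add: length_hist_set prod.distrib)
  then show "(\<Prod>k<K. alg (take k hs) (fst (hs ! k)) * pr_pi H (par th) (fst (hs ! k)) (snd (hs ! k))) * F th hs
               = alg_weight hs * (lik th hs * F th hs)"
    by simp
qed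

text \<open>Summing out the last episode: its policy is drawn from \<open>alg D\<close> and its trajectory has
  total probability one.\<close>
lemma sum_snoc_alg_weight_hist_lik:
  assumes v: "valid_pvec H v"
  shows "(\<Sum>x\<in>Pi_c H \<times> traj_set H. alg_weight (D @ [x]) * hist_lik H v (D @ [x]) * F (fst x))
           = alg_weight D * hist_lik H v D * (\<Sum>pol\<in>Pi_c H. alg D pol * F pol)"
proof -
  have "(\<Sum>x\<in>Pi_c H \<times> traj_set H. alg_weight (D @ [x]) * hist_lik H v (D @ [x]) * F (fst x))
          = alg_weight D * hist_lik H v D *
              (\<Sum>pol\<in>Pi_c H. alg D pol * F pol * (\<Sum>tau\<in>traj_set H. pr_pi H v pol tau))"
    by (simp add: alg_weight_snoc hist_lik_snoc sum.cartesian_product' sum_distrib_left mult_ac)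
  then show ?thesis by (simp add: sum_pr_pi[OF v H])
qed

lemma integral_sum_weighted_lik:
  assumes "\<And>hs. hs \<in> A \<Longrightarrow> bounded_rv (g hs)"
  shows "(\<integral>th. (\<Sum>hs\<in>A. c hs * (lik th hs * g hs th)) \<partial>nu1) = (\<Sum>hs\<in>A. c hs * (\<integral>th. lik th hs * g hs th \<partial>nu1))"
proof -
  have "integrable nu1 (\<lambda>th. lik th hs * g hs th)" if "hs \<in> A" for hs
    using assms that by (intro bounded_rv_integrable bounded_rv_mult bounded_rv_lik)
  then show ?thesis by (subst Bochner_Integration.integral_sum) auto
qed

lemma sum_ps_alg_mult_integral_lik:
  "(\<Sum>pol\<in>Pi_c H. alg D pol) * (\<integral>th. lik th D * g th \<partial>nu1) = (\<integral>th. lik th D * g th \<partial>nu1)"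
  by (simp add: sum_ps_alg integral_lik_mult_evidence_0)

lemma integral_lik_sum_ps_alg:
  assumes g: "\<And>pol. bounded_rv (g pol)"
  shows "(\<integral>th. lik th D * (\<Sum>pol\<in>Pi_c H. alg D pol * g pol th) \<partial>nu1)
           = (\<Sum>pol\<in>Pi_c H. alg D pol * (\<integral>th. lik th D * g pol th \<partial>nu1))"
proof -
  have "(\<integral>th. lik th D * (\<Sum>pol\<in>Pi_c H. alg D pol * g pol th) \<partial>nu1)
          = (\<integral>th. (\<Sum>pol\<in>Pi_c H. alg D pol * (lik th D * g pol th)) \<partial>nu1)"
    by (simp add: sum_distrib_left mult.left_commute)
  also have "\<dots> = (\<Sum>pol\<in>Pi_c H. \<integral>th. alg D pol * (lik th D * g pol th) \<partial>nu1)"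
    by (rule Bochner_Integration.integral_sum) (intro bounded_rv_integrable bounded_rv_mult bounded_rv_const bounded_rv_lik g)
  finally show ?thesis by simp
qed

text \<open>The expected value of a function of the first \<open>m\<close> episodes does not depend on how many
  further episodes are run.\<close>
lemma integral_sum_hist_set_take:
  assumes mn: "m \<le> n" and G: "\<And>D. bounded_rv (G D)"
  shows "(\<integral>th. (\<Sum>hs\<in>hist_set H n. alg_weight hs * (lik th hs * G (take m hs) th)) \<partial>nu1)
           = (\<integral>th. (\<Sum>D\<in>hist_set H m. alg_weight D * (lik th D * G D th)) \<partial>nu1)"
  using mn
proof (induction n rule: dec_induct)
  case base
  show ?case by (intro Bochner_Integration.integral_cong refl sum.cong) (simp add: length_hist_set)
next
  case (step n)
  define mass where "mass hs = (\<Sum>pol\<in>Pi_c H. alg hs pol)" for hs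
  have last_episode: "(\<Sum>x\<in>Pi_c H \<times> traj_set H. alg_weight (hs @ [x]) * (lik th (hs @ [x]) * G (take m (hs @ [x])) th))
                        = (alg_weight hs * mass hs) * (lik th hs * G (take m hs) th)"
    if th: "th \<in> space nu1" and hs: "hs \<in> hist_set H n" for th hs
  proof -
    have "take m (hs @ [x]) = take m hs" for x using hs step.hyps by (simp add: length_hist_set)
    then have "(\<Sum>x\<in>Pi_c H \<times> traj_set H. alg_weight (hs @ [x]) * (lik th (hs @ [x]) * G (take m (hs @ [x])) th))
                 = (\<Sum>x\<in>Pi_c H \<times> traj_set H. alg_weight (hs @ [x]) * lik th (hs @ [x]) * 1) * G (take m hs) th"
      by (simp add: sum_distrib_right mult.assoc)
    then show ?thesis
      unfolding sum_snoc_alg_weight_hist_lik[OF valid_par[OF th], of hs "\<lambda>_. 1"] mass_def by simp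
  qed
  have "(\<integral>th. (\<Sum>hs\<in>hist_set H (Suc n). alg_weight hs * (lik th hs * G (take m hs) th)) \<partial>nu1)
          = (\<integral>th. (\<Sum>hs\<in>hist_set H n. (alg_weight hs * mass hs) * (lik th hs * G (take m hs) th)) \<partial>nu1)"
    unfolding sum_hist_set_Suc by (intro Bochner_Integration.integral_cong refl sum.cong last_episode)
  also have "\<dots> = (\<Sum>hs\<in>hist_set H n. (alg_weight hs * mass hs) * (\<integral>th. lik th hs * G (take m hs) th \<partial>nu1))"
    by (rule integral_sum_weighted_lik) (rule G)
  also have "\<dots> = (\<Sum>hs\<in>hist_set H n. alg_weight hs * (\<integral>th. lik th hs * G (take m hs) th \<partial>nu1))"
    unfolding mass_def mult.assoc sum_ps_alg_mult_integral_lik ..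
  also have "\<dots> = (\<integral>th. (\<Sum>hs\<in>hist_set H n. alg_weight hs * (lik th hs * G (take m hs) th)) \<partial>nu1)"
    by (rule integral_sum_weighted_lik[symmetric]) (rule G)
  finally show ?case using step.IH by simp
qed

lemma sum_alg_weight_evidence: "(\<Sum>D\<in>hist_set H k. alg_weight D * evidence D) = 1"
proof -
  have "(\<Sum>D\<in>hist_set H k. alg_weight D * evidence D) = (\<integral>th. (\<Sum>D\<in>hist_set H k. alg_weight D * (lik th D * 1)) \<partial>nu1)"
    unfolding evidence_def by (subst integral_sum_weighted_lik) simp_all
  also have "\<dots> = (\<integral>th. (\<Sum>D\<in>hist_set H 0. alg_weight D * (lik th D * 1)) \<partial>nu1)"
    using integral_sum_hist_set_take[of 0 k "\<lambda>_ _. 1"] by simp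
  also have "\<dots> = 1" by (simp add: hist_set_0 alg_weight_def prob_space)
  finally show ?thesis .
qed

lemma sum_alg_weight_hist_lik_le_1:
  assumes v: "valid_pvec H v"
  shows "(\<Sum>D\<in>hist_set H k. alg_weight D * hist_lik H v D) \<le> 1"
proof (induction k)
  case 0
  show ?case by (simp add: hist_set_0 alg_weight_def)
next
  case (Suc k)
  have "(\<Sum>D\<in>hist_set H (Suc k). alg_weight D * hist_lik H v D)
          = (\<Sum>D\<in>hist_set H k. alg_weight D * hist_lik H v D * (\<Sum>pol\<in>Pi_c H. alg D pol))"
    unfolding sum_hist_set_Suc using sum_snoc_alg_weight_hist_lik[OF v, of _ "\<lambda>_. 1"] by simp
  also have "\<dots> \<le> (\<Sum>D\<in>hist_set H k. alg_weight D * hist_lik H v D)"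
  proof (intro sum_mono mult_right_le_one_le mult_nonneg_nonneg alg_weight_nonneg hist_lik_nonneg v)
    fix D :: "('o, 'a) data"
    show "(\<Sum>pol\<in>Pi_c H. alg D pol) \<le> 1" unfolding sum_ps_alg by simp
  qed (intro sum_nonneg ps_alg_nonneg)
  finally show ?case using Suc.IH by simp
qed

lemma bounded_rv_value_fn: "bounded_rv (\<lambda>th. value_fn H r (par th) pol)"
  unfolding value_fn_eq_sum_traj_reward by (intro bounded_rv_sum bounded_rv_mult bounded_rv_pr_pi bounded_rv_const)

lemma opt_value_eq_sum_sampled:
  assumes th: "th \<in> space nu1"
  shows "opt_value H r (par th) = (\<Sum>pol\<in>Pi_c H. indicator (sampled pol) th * value_fn H r (par th) pol)"
proof -
  have "opt_value H r (par th) = value_fn H r (par th) (planner th)"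
    unfolding opt_value_def using planner_opt th by (intro cSup_eq_maximum) auto
  then show ?thesis by (simp add: sum_indicator_sampled[OF th] value_fn_canon)
qed

lemma bounded_rv_opt_value: "bounded_rv (\<lambda>th. opt_value H r (par th))"
proof (rule bounded_rv_cong)
  show "bounded_rv (\<lambda>th. \<Sum>pol\<in>Pi_c H. indicator (sampled pol) th * value_fn H r (par th) pol)"
    by (intro bounded_rv_sum bounded_rv_mult bounded_rv_indicator sets_sampled bounded_rv_value_fn)
qed (simp add: opt_value_eq_sum_sampled)

lemma joint_exp_sum:
  assumes "\<And>k hs. bounded_rv (\<lambda>th. f k th hs)"
  shows "joint_exp H nu1 par alg K (\<lambda>th hs. \<Sum>k<K. f k th hs) = (\<Sum>k<K. joint_exp H nu1 par alg K (f k))"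
proof -
  have "(\<integral>th. (\<Sum>hs\<in>hist_set H K. alg_weight hs * (lik th hs * (\<Sum>k<K. f k th hs))) \<partial>nu1)
          = (\<integral>th. (\<Sum>k<K. \<Sum>hs\<in>hist_set H K. alg_weight hs * (lik th hs * f k th hs)) \<partial>nu1)"
    by (intro Bochner_Integration.integral_cong refl) (simp add: sum_distrib_left sum.swap[of _ "{..<K}"])
  also have "\<dots> = (\<Sum>k<K. (\<integral>th. (\<Sum>hs\<in>hist_set H K. alg_weight hs * (lik th hs * f k th hs)) \<partial>nu1))"
    by (rule Bochner_Integration.integral_sum)
       (intro bounded_rv_integrable bounded_rv_sum bounded_rv_mult bounded_rv_const bounded_rv_lik assms)
  finally show ?thesis unfolding joint_exp_eq .
qed

lemma integral_lik_regret_eq: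
  assumes "evidence D \<noteq> 0"
  shows "(\<integral>th. lik th D * (\<Sum>pol\<in>Pi_c H. alg D pol * (opt_value H r (par th) - value_fn H r (par th) pol)) \<partial>nu1)
           = (\<integral>th. lik th D * opt_value H r (par th) \<partial>nu1)
             - (\<Sum>pol\<in>Pi_c H. alg D pol * (\<integral>th. lik th D * value_fn H r (par th) pol \<partial>nu1))"
proof -
  have mass: "(\<Sum>pol\<in>Pi_c H. alg D pol) = 1" using sum_ps_alg assms by simp
  have "lik th D * (\<Sum>pol\<in>Pi_c H. alg D pol * (opt_value H r (par th) - value_fn H r (par th) pol))
          = lik th D * opt_value H r (par th) - lik th D * (\<Sum>pol\<in>Pi_c H. alg D pol * value_fn H r (par th) pol)"
    for th
    by (simp add: right_diff_distrib sum_subtractf sum_distrib_right[symmetric] mass)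
  then have "(\<integral>th. lik th D * (\<Sum>pol\<in>Pi_c H. alg D pol * (opt_value H r (par th) - value_fn H r (par th) pol)) \<partial>nu1)
               = (\<integral>th. lik th D * opt_value H r (par th) \<partial>nu1)
                 - (\<integral>th. lik th D * (\<Sum>pol\<in>Pi_c H. alg D pol * value_fn H r (par th) pol) \<partial>nu1)"
    by (simp only:) (intro Bochner_Integration.integral_diff bounded_rv_integrable bounded_rv_mult bounded_rv_sum
          bounded_rv_lik bounded_rv_opt_value bounded_rv_value_fn bounded_rv_const)
  then show ?thesis by (simp add: integral_lik_sum_ps_alg bounded_rv_value_fn)
qed

text \<open>The expected value of a quantity determined by the data before episode \<open>k\<close> and the
  policy played in episode \<open>k\<close>: that policy is drawn from \<open>alg D\<close>.\<close>
lemma joint_exp_episode: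
  assumes G: "\<And>D pol. bounded_rv (\<lambda>th. G th D pol)" and k: "k < K"
  shows "joint_exp H nu1 par alg K (\<lambda>th hs. G th (take k hs) (fst (hs ! k)))
           = (\<integral>th. (\<Sum>D\<in>hist_set H k. alg_weight D * (lik th D * (\<Sum>pol\<in>Pi_c H. alg D pol * G th D pol))) \<partial>nu1)"
proof -
  define G' where "G' D th = G th (take k D) (fst (D ! k))" for D th
  have "joint_exp H nu1 par alg K (\<lambda>th hs. G th (take k hs) (fst (hs ! k)))
          = (\<integral>th. (\<Sum>hs\<in>hist_set H K. alg_weight hs * (lik th hs * G' (take (Suc k) hs) th)) \<partial>nu1)"
    unfolding joint_exp_eq G'_def by (simp add: min_def)
  also have "\<dots> = (\<integral>th. (\<Sum>D\<in>hist_set H (Suc k). alg_weight D * (lik th D * G' D th)) \<partial>nu1)"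
    using k by (intro integral_sum_hist_set_take[of "Suc k" K G']) (simp_all add: G'_def[abs_def] G)
  also have "\<dots> = (\<integral>th. (\<Sum>D\<in>hist_set H k. alg_weight D * (lik th D * (\<Sum>pol\<in>Pi_c H. alg D pol * G th D pol))) \<partial>nu1)"
  proof (intro Bochner_Integration.integral_cong refl)
    fix th assume th: "th \<in> space nu1"
    have last_episode: "(\<Sum>x\<in>Pi_c H \<times> traj_set H. alg_weight (D @ [x]) * (lik th (D @ [x]) * G' (D @ [x]) th))
            = alg_weight D * (lik th D * (\<Sum>pol\<in>Pi_c H. alg D pol * G th D pol))"
      if "D \<in> hist_set H k" for D
      using that sum_snoc_alg_weight_hist_lik[OF valid_par[OF th], of D "G th D"]
      by (simp add: G'_def length_hist_set nth_append mult.assoc)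
    show "(\<Sum>D\<in>hist_set H (Suc k). alg_weight D * (lik th D * G' D th))
            = (\<Sum>D\<in>hist_set H k. alg_weight D * (lik th D * (\<Sum>pol\<in>Pi_c H. alg D pol * G th D pol)))"
      unfolding sum_hist_set_Suc by (rule sum.cong[OF refl last_episode])
  qed
  finally show ?thesis .
qed

end

section \<open>Confidence sets and the discretised prior\<close>

lemma mem_conf_set_if_hist_lik_ge:
  assumes Tb: "finite Tb" "\<forall>v\<in>Tb. valid_pvec H v" and K: "1 \<le> K" and u: "u \<in> Tb"
    and lik_ratio: "\<And>v. v \<in> Tb \<Longrightarrow> hist_lik H v D \<le> real K * real (card Tb) * exp 1 * hist_lik H u D"
  shows "u \<in> conf_set H K Tb D"
proof -
  define c where "c = real K * real (card Tb)"
  have "1 \<le> card Tb" using Tb(1) u by (auto simp: Suc_le_eq card_gt_0_iff)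
  then have c: "1 \<le> c" unfolding c_def using K by (intro mult_ge1_I) auto
  have "Max ((\<lambda>w. loglik H w D) ` Tb) \<in> (\<lambda>w. loglik H w D) ` Tb"
    using Tb(1) u by (intro Max_in) auto
  then obtain w where w: "w \<in> Tb" "Max ((\<lambda>w. loglik H w D) ` Tb) = loglik H w D"
    by auto
  have valid: "valid_pvec H w" "valid_pvec H u" using Tb(2) w(1) u by auto
  have "loglik H w D - ereal (ln c) - 1 \<le> loglik H u D"
  proof (cases "0 < hist_lik H w D")
    case False
    then have "loglik H w D - ereal (ln c) - 1 = -\<infinity>"
      using loglik_eq_ln_hist_lik[OF valid(1)] by (simp add: ereal_minus(2)[of 1, folded one_ereal_def])
    then show ?thesis by simp
  next
    case True
    have le: "hist_lik H w D \<le> c * exp 1 * hist_lik H u D" using lik_ratio[OF w(1)] unfolding c_def .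
    then have "0 < c * exp 1 * hist_lik H u D" using True by linarith
    then have pos: "0 < hist_lik H u D" by (rule zero_less_mult_pos) (use c in simp)
    have "ln (hist_lik H w D) \<le> ln (c * exp 1 * hist_lik H u D)" using True le by simp
    also have "\<dots> = ln c + 1 + ln (hist_lik H u D)" using c pos by (simp add: ln_mult)
    finally have "ereal (ln (hist_lik H w D)) - ereal (ln c) - ereal 1 \<le> ereal (ln (hist_lik H u D))"
      by simp
    then show ?thesis
      using loglik_eq_ln_hist_lik[OF valid(1)] loglik_eq_ln_hist_lik[OF valid(2)] True pos
      by (simp only: one_ereal_def if_True)
  qed
  then show ?thesis unfolding conf_set_def c_def using u w by simp
qed

lemma conf_set_nonempty:
  assumes Tb: "finite Tb" "Tb \<noteq> {}" "\<forall>v\<in>Tb. valid_pvec H v" and K: "1 \<le> K"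
  shows "conf_set H K Tb D \<noteq> {}"
proof -
  have "Max ((\<lambda>v. hist_lik H v D) ` Tb) \<in> (\<lambda>v. hist_lik H v D) ` Tb"
    using Tb(1,2) by (intro Max_in) auto
  then obtain u where u: "u \<in> Tb" "hist_lik H u D = Max ((\<lambda>v. hist_lik H v D) ` Tb)"
    by auto
  have "1 \<le> card Tb" using Tb(1,2) by (auto simp: Suc_le_eq card_gt_0_iff)
  then have "1 \<le> real K * real (card Tb) * exp 1"
    using K by (intro mult_ge1_I) auto
  from mult_right_mono[OF this hist_lik_nonneg[of H u D]]
  have u_scaled: "hist_lik H u D \<le> real K * real (card Tb) * exp 1 * hist_lik H u D"
    using Tb(3) u(1) by simp
  have "u \<in> conf_set H K Tb D"
  proof (rule mem_conf_set_if_hist_lik_ge[OF Tb(1,3) K u(1)])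
    fix v assume "v \<in> Tb"
    then have "hist_lik H v D \<le> hist_lik H u D"
      unfolding u(2) using Tb(1) by (intro Max_ge) auto
    then show "hist_lik H v D \<le> real K * real (card Tb) * exp 1 * hist_lik H u D"
      using u_scaled by (rule order.trans)
  qed
  then show ?thesis by auto
qed

locale discretised_posterior_sampling = posterior_sampling H r nu1 par planner
  for H :: nat
    and r :: "nat \<Rightarrow> 'o::finite \<Rightarrow> 'a::finite \<Rightarrow> real"
    and nu1 :: "'p measure"
    and par :: "'p \<Rightarrow> ('s::finite, 'a, 'o) pvec"
    and planner :: "'p \<Rightarrow> ('o, 'a) policy" +
  fixes K :: nat
    and eps :: real
    and Tb :: "('s, 'a, 'o) pvec set"
    and iota :: "'p \<Rightarrow> ('s, 'a, 'o) pvec"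
  assumes K: "1 \<le> K"
    and eps: "eps = 1 / (2 * real H * real K)"
    and Tb_fin: "finite Tb"
    and Tb_valid: "\<forall>v\<in>Tb. valid_pvec H v"
    and iota_onto: "iota ` space nu1 = Tb"
    and iota_meas: "\<forall>v\<in>Tb. {th \<in> space nu1. iota th = v} \<in> sets nu1"
    and iota_tv: "\<forall>th\<in>space nu1. \<forall>pol.
                    tv_dist H (pr_pi H (iota th) pol) (pr_pi H (par th) pol) \<le> 2 * real H * eps"
    and iota_lb: "\<forall>th\<in>space nu1. \<forall>tau\<in>traj_set H.
                    pr_minus H (par th) tau / (1 + eps) ^ (2 * H) \<le> pr_minus H (iota th) tau"
begin

lemma iota_in_Tb: "th \<in> space nu1 \<Longrightarrow> iota th \<in> Tb"
  using iota_onto by auto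

lemma Tb_nonempty: "Tb \<noteq> {}"
  using iota_onto not_empty by auto

lemma value_fn_le_value_fn_iota:
  assumes th: "th \<in> space nu1"
  shows "value_fn H r (par th) pol \<le> value_fn H r (iota th) pol + real H / real K"
proof -
  have "tv_dist H (pr_pi H (par th) pol) (pr_pi H (iota th) pol) \<le> 1 / real K"
    using iota_tv th H K unfolding eps by (simp add: tv_dist_commute)
  then have "real H * tv_dist H (pr_pi H (par th) pol) (pr_pi H (iota th) pol) \<le> real H / real K"
    using mult_left_mono[of _ "1 / real K" "real H"] by simp
  then show ?thesis using value_fn_diff_le_tv_dist[OF rew, of "par th" pol "iota th"] by simp
qed

lemma eps_pos: "0 < eps"
  using H K unfolding eps by simp

text \<open>The choice \<open>\<epsilon> = 1/(2HK)\<close> makes the accumulated distortion \<open>(1 + \<epsilon>)^(2Hk)\<close> of the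
  likelihood of the discretised parameter at most \<open>e\<close> over \<open>k \<le> K\<close> episodes.\<close>
lemma one_plus_eps_power_le_exp_1:
  assumes "k \<le> K"
  shows "(1 + eps) ^ (2 * H * k) \<le> exp 1"
proof -
  have "(1 + eps) ^ (2 * H * k) \<le> (1 + eps) ^ (2 * H * K)"
    using eps_pos assms by (intro power_increasing) auto
  also have "\<dots> \<le> exp eps ^ (2 * H * K)"
    using eps_pos by (intro power_mono) auto
  also have "\<dots> = exp (real (2 * H * K) * eps)" by (rule exp_of_nat_mult[symmetric])
  also have "real (2 * H * K) * eps = 1" using H K unfolding eps by simp
  finally show ?thesis by simp
qed

lemma hist_lik_iota_ge:
  assumes th: "th \<in> space nu1" and D: "D \<in> hist_set H k" and k: "k \<le> K"
  shows "lik th D / exp 1 \<le> hist_lik H (iota th) D"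
proof -
  have "lik th D / exp 1 \<le> lik th D / (1 + eps) ^ (2 * H * k)"
    using one_plus_eps_power_le_exp_1[OF k] lik_nonneg[OF th] eps_pos
    by (intro divide_left_mono mult_pos_pos zero_less_power) auto
  also have "\<dots> = (\<Prod>j<length D. pr_pi H (par th) (fst (D ! j)) (snd (D ! j)) / (1 + eps) ^ (2 * H))"
    unfolding hist_lik_def prod_dividef using length_hist_set[OF D] by (simp add: power_mult)
  also have "\<dots> \<le> hist_lik H (iota th) D"
    unfolding hist_lik_def
  proof (rule prod_mono)
    fix j assume "j \<in> {..<length D}"
    then have tau: "snd (D ! j) \<in> traj_set H" using hist_set_nth_traj_set[OF D] by simp
    have "pr_pi H (par th) (fst (D ! j)) (snd (D ! j)) / (1 + eps) ^ (2 * H)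
            = pol_prob H (fst (D ! j)) (snd (D ! j)) * (pr_minus H (par th) (snd (D ! j)) / (1 + eps) ^ (2 * H))"
      unfolding pr_pi_def by simp
    also have "\<dots> \<le> pr_pi H (iota th) (fst (D ! j)) (snd (D ! j))"
      unfolding pr_pi_def using iota_lb th tau by (intro mult_left_mono pol_prob_nonneg) auto
    finally show "0 \<le> pr_pi H (par th) (fst (D ! j)) (snd (D ! j)) / (1 + eps) ^ (2 * H) \<and>
                  pr_pi H (par th) (fst (D ! j)) (snd (D ! j)) / (1 + eps) ^ (2 * H) \<le> pr_pi H (iota th) (fst (D ! j)) (snd (D ! j))"
      using pr_pi_nonneg[OF valid_par[OF th]] eps_pos by simp
  qed
  finally show ?thesis .
qed

lemma iota_in_conf_set:
  assumes th: "th \<in> space nu1" and D: "D \<in> hist_set H k" and k: "k \<le> K"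
    and ratio: "\<And>v. v \<in> Tb \<Longrightarrow> hist_lik H v D \<le> real K * real (card Tb) * lik th D"
  shows "iota th \<in> conf_set H K Tb D"
proof (rule mem_conf_set_if_hist_lik_ge[OF Tb_fin Tb_valid K iota_in_Tb[OF th]])
  fix v assume "v \<in> Tb"
  have "lik th D \<le> exp 1 * hist_lik H (iota th) D"
    using hist_lik_iota_ge[OF th D k] by (simp add: field_simps)
  with ratio[OF \<open>v \<in> Tb\<close>] show "hist_lik H v D \<le> real K * real (card Tb) * exp 1 * hist_lik H (iota th) D"
    by (smt (verit) mult.assoc mult_left_mono of_nat_0_le_iff zero_le_mult_iff)
qed

definition fibre :: "('s, 'a, 'o) pvec \<Rightarrow> 'p set" where
  "fibre v = {th \<in> space nu1. iota th = v}"

lemma sets_fibre: "v \<in> Tb \<Longrightarrow> fibre v \<in> sets nu1"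
  unfolding fibre_def using iota_meas by auto

lemma sum_indicator_fibre:
  assumes th: "th \<in> space nu1"
  shows "(\<Sum>v\<in>Tb. indicator (fibre v) th * f v) = (f (iota th) :: real)"
proof -
  have "(\<Sum>v\<in>Tb. indicator (fibre v) th * f v) = (\<Sum>v\<in>Tb. if iota th = v then f v else 0)"
    using th by (intro sum.cong) (auto simp: fibre_def indicator_def)
  then show ?thesis using Tb_fin iota_in_Tb[OF th] by simp
qed

text \<open>The sets \<open>sampled pol \<inter> fibre v\<close> partition the parameter space.\<close>
lemma sum_indicator_cells:
  assumes th: "th \<in> space nu1"
  shows "(\<Sum>pol\<in>Pi_c H. \<Sum>v\<in>Tb. indicator (sampled pol) th * indicator (fibre v) th * g pol v)
           = (g (canon H (planner th)) (iota th) :: real)"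
proof -
  have "(\<Sum>pol\<in>Pi_c H. \<Sum>v\<in>Tb. indicator (sampled pol) th * indicator (fibre v) th * g pol v)
          = (\<Sum>pol\<in>Pi_c H. indicator (sampled pol) th * (\<Sum>v\<in>Tb. indicator (fibre v) th * g pol v))"
    by (simp add: sum_distrib_left mult.assoc)
  then show ?thesis by (simp add: sum_indicator_fibre[OF th] sum_indicator_sampled[OF th])
qed

lemma bounded_rv_sum_cells:
  assumes g: "\<And>pol v. bounded_rv (g pol v)"
  shows "bounded_rv (\<lambda>th. \<Sum>pol\<in>Pi_c H. \<Sum>v\<in>Tb. indicator (sampled pol) th * indicator (fibre v) th * g pol v th)"
  by (intro bounded_rv_sum bounded_rv_mult bounded_rv_indicator sets_sampled sets_fibre g)

lemma bounded_rv_cells: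
  assumes g: "\<And>pol v. bounded_rv (g pol v)"
  shows "bounded_rv (\<lambda>th. g (canon H (planner th)) (iota th) th)"
  using bounded_rv_sum_cells[OF g] by (rule bounded_rv_cong[rotated]) (simp add: sum_indicator_cells)

lemma sum_integral_cells:
  assumes g: "\<And>pol v. bounded_rv (g pol v)"
  shows "(\<Sum>pol\<in>Pi_c H. \<Sum>v\<in>Tb. \<integral>th. indicator (sampled pol) th * indicator (fibre v) th * g pol v th \<partial>nu1)
           = (\<integral>th. g (canon H (planner th)) (iota th) th \<partial>nu1)"
proof -
  have "integrable nu1 (\<lambda>th. indicator (sampled pol) th * indicator (fibre v) th * g pol v th)"
    if "v \<in> Tb" for pol v
    using that by (intro bounded_rv_integrable bounded_rv_mult bounded_rv_indicator sets_sampled sets_fibre g)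
  then have "(\<Sum>pol\<in>Pi_c H. \<Sum>v\<in>Tb. \<integral>th. indicator (sampled pol) th * indicator (fibre v) th * g pol v th \<partial>nu1)
               = (\<integral>th. (\<Sum>pol\<in>Pi_c H. \<Sum>v\<in>Tb. indicator (sampled pol) th * indicator (fibre v) th * g pol v th) \<partial>nu1)"
    by (simp add: Bochner_Integration.integral_sum integrable_sum)
  also have "\<dots> = (\<integral>th. g (canon H (planner th)) (iota th) th \<partial>nu1)"
    by (intro Bochner_Integration.integral_cong refl) (rule sum_indicator_cells)
  finally show ?thesis .
qed

definition cell_mass :: "('o, 'a) data \<Rightarrow> ('o, 'a) policy \<Rightarrow> ('s, 'a, 'o) pvec \<Rightarrow> real" where
  "cell_mass D pol v = (\<integral>th. indicator (sampled pol) th * indicator (fibre v) th * lik th D \<partial>nu1)"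

lemma cell_mass_nonneg: "0 \<le> cell_mass D pol v"
  unfolding cell_mass_def by (intro integral_nonneg_AE AE_I2 mult_nonneg_nonneg lik_nonneg) auto

lemma sum_cell_mass: "(\<Sum>pol\<in>Pi_c H. \<Sum>v\<in>Tb. cell_mass D pol v) = evidence D"
  unfolding cell_mass_def evidence_def using sum_integral_cells[of "\<lambda>_ _ th. lik th D"]
  by (simp add: bounded_rv_lik)

lemma ps_alg_eq_sum_cell_mass: "alg D pol = (\<Sum>v\<in>Tb. cell_mass D pol v) / evidence D"
proof -
  have "(\<Sum>v\<in>Tb. cell_mass D pol v)
          = (\<integral>th. (\<Sum>v\<in>Tb. indicator (fibre v) th * (indicator (sampled pol) th * lik th D)) \<partial>nu1)"
    unfolding cell_mass_def
    by (subst Bochner_Integration.integral_sum)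
       (auto simp: mult_ac intro!: bounded_rv_integrable bounded_rv_mult bounded_rv_indicator sets_sampled sets_fibre bounded_rv_lik)
  also have "\<dots> = (\<integral>th. indicator (sampled pol) th * lik th D \<partial>nu1)"
    by (intro Bochner_Integration.integral_cong refl) (rule sum_indicator_fibre)
  finally show ?thesis unfolding ps_alg_eq by simp
qed

definition conf_tv :: "('o, 'a) data \<Rightarrow> ('o, 'a) policy \<Rightarrow> 'p \<Rightarrow> real" where
  "conf_tv D pol th = Max ((\<lambda>v. tv_dist H (pr_pi H v pol) (pr_pi H (par th) pol)) ` conf_set H K Tb D)"

lemma conf_set_subset: "conf_set H K Tb D \<subseteq> Tb"
  unfolding conf_set_def by auto

lemma finite_conf_set: "finite (conf_set H K Tb D)"
  using Tb_fin conf_set_subset by (rule finite_subset[rotated])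

lemma tv_dist_le_conf_tv:
  "v \<in> conf_set H K Tb D \<Longrightarrow> tv_dist H (pr_pi H v pol) (pr_pi H (par th) pol) \<le> conf_tv D pol th"
  unfolding conf_tv_def using finite_conf_set by (intro Max_ge) auto

lemma conf_tv_nonneg: "0 \<le> conf_tv D pol th"
proof -
  obtain v where "v \<in> conf_set H K Tb D"
    using conf_set_nonempty[OF Tb_fin Tb_nonempty Tb_valid K] by auto
  then show ?thesis using tv_dist_le_conf_tv tv_dist_nonneg order.trans by metis
qed

lemma bounded_rv_conf_tv: "bounded_rv (conf_tv D pol)"
  unfolding bounded_rv_def
proof (intro conjI exI ballI)
  show "conf_tv D pol \<in> borel_measurable nu1"
    unfolding conf_tv_def tv_dist_eq_Max_image
    using bounded_rv_measurable[OF bounded_rv_pr_pi]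
    by (intro borel_measurable_Max finite_imageI finite_conf_set) (auto simp: finite_traj_set)
  fix th assume th: "th \<in> space nu1"
  have "conf_tv D pol th \<in> (\<lambda>v. tv_dist H (pr_pi H v pol) (pr_pi H (par th) pol)) ` conf_set H K Tb D"
    unfolding conf_tv_def using finite_conf_set conf_set_nonempty[OF Tb_fin Tb_nonempty Tb_valid K]
    by (intro Max_in) auto
  then obtain v where v: "v \<in> Tb" "conf_tv D pol th = tv_dist H (pr_pi H v pol) (pr_pi H (par th) pol)"
    using conf_set_subset by auto
  moreover have "tv_dist H (pr_pi H v pol) (pr_pi H (par th) pol) \<le> 2"
    using Tb_valid v(1) by (intro tv_dist_pr_pi_le_2 valid_par th H) auto
  ultimately show "\<bar>conf_tv D pol th\<bar> \<le> 2"
    using tv_dist_nonneg[of H "pr_pi H v pol" "pr_pi H (par th) pol"] by simp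
qed

lemma value_fn_diff_le_conf_tv:
  assumes th: "th \<in> space nu1" and v: "v \<in> Tb"
  shows "value_fn H r v pol - value_fn H r (par th) pol
           \<le> real H * of_bool (v \<notin> conf_set H K Tb D) + real H * conf_tv D pol th"
proof (cases "v \<in> conf_set H K Tb D")
  case True
  have "value_fn H r v pol - value_fn H r (par th) pol \<le> real H * tv_dist H (pr_pi H v pol) (pr_pi H (par th) pol)"
    by (rule value_fn_diff_le_tv_dist[OF rew])
  also have "\<dots> \<le> real H * conf_tv D pol th"
    using tv_dist_le_conf_tv[OF True] by (intro mult_left_mono) auto
  finally show ?thesis using True by simp
next
  case False
  have "value_fn H r v pol \<le> real H" using value_fn_bounds(2)[OF rew _ H] Tb_valid v by auto
  moreover have "0 \<le> value_fn H r (par th) pol" using value_fn_bounds(1)[OF rew valid_par[OF th] H] .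
  moreover have "0 \<le> real H * conf_tv D pol th" using conf_tv_nonneg by simp
  ultimately show ?thesis using False by simp
qed

definition excluded :: "('o, 'a) data \<Rightarrow> 'p set" where
  "excluded D = {th \<in> space nu1. iota th \<notin> conf_set H K Tb D}"

lemma sets_excluded: "excluded D \<in> sets nu1"
proof -
  have "excluded D = space nu1 - (\<Union>v\<in>conf_set H K Tb D. fibre v)"
    unfolding excluded_def fibre_def by auto
  also have "\<dots> \<in> sets nu1"
    using conf_set_subset sets_fibre by (intro sets.Diff sets.top sets.finite_UN finite_conf_set) auto
  finally show ?thesis .
qed

lemma cell_mass_mult_right:
  "cell_mass D pol v * c = (\<integral>th. indicator (sampled pol) th * indicator (fibre v) th * (lik th D * c) \<partial>nu1)"
  unfolding cell_mass_def by (subst integral_mult_left_zero[symmetric]) (simp only: mult.assoc)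

lemma integral_lik_excluded_eq_sum_cell_mass:
  "(\<integral>th. lik th D * indicator (excluded D) th \<partial>nu1)
     = (\<Sum>pol\<in>Pi_c H. \<Sum>v\<in>Tb. cell_mass D pol v * of_bool (v \<notin> conf_set H K Tb D))"
proof -
  have "(\<Sum>pol\<in>Pi_c H. \<Sum>v\<in>Tb. cell_mass D pol v * of_bool (v \<notin> conf_set H K Tb D))
          = (\<integral>th. lik th D * of_bool (iota th \<notin> conf_set H K Tb D) \<partial>nu1)"
    unfolding cell_mass_mult_right
    by (rule sum_integral_cells) (intro bounded_rv_mult bounded_rv_lik bounded_rv_const)
  also have "\<dots> = (\<integral>th. lik th D * indicator (excluded D) th \<partial>nu1)"
    by (intro Bochner_Integration.integral_cong refl) (simp add: excluded_def indicator_def)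
  finally show ?thesis ..
qed

text \<open>Markov's inequality: a parameter whose likelihood falls below \<open>1/(K |Tb|)\<close> times
  that of some vector in \<open>Tb\<close> is rare, since every vector of \<open>Tb\<close> has expected likelihood
  ratio at most one.\<close>
lemma lik_excluded_le:
  assumes th: "th \<in> space nu1" and D: "D \<in> hist_set H k" and k: "k \<le> K"
  shows "lik th D * indicator (excluded D) th \<le> (\<Sum>v\<in>Tb. hist_lik H v D) / (real K * real (card Tb))"
proof -
  have c: "0 < real K * real (card Tb)" using K Tb_fin Tb_nonempty by (simp add: card_gt_0_iff)
  have "lik th D \<le> (\<Sum>v\<in>Tb. hist_lik H v D) / (real K * real (card Tb))" if "th \<in> excluded D"
  proof -
    from that have "iota th \<notin> conf_set H K Tb D" by (simp add: excluded_def)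
    then obtain v where v: "v \<in> Tb" "\<not> hist_lik H v D \<le> real K * real (card Tb) * lik th D"
      using iota_in_conf_set[OF th D k] by blast
    then have v2: "real K * real (card Tb) * lik th D < hist_lik H v D" by simp
    have "hist_lik H v D \<le> (\<Sum>v\<in>Tb. hist_lik H v D)"
      using v(1) Tb_fin Tb_valid by (intro member_le_sum hist_lik_nonneg) auto
    with v2 c show ?thesis by (simp add: field_simps)
  qed
  moreover have "0 \<le> (\<Sum>v\<in>Tb. hist_lik H v D) / (real K * real (card Tb))"
    using Tb_valid c by (intro divide_nonneg_pos sum_nonneg hist_lik_nonneg) auto
  ultimately show ?thesis by (simp add: indicator_def)
qed

lemma sum_alg_weight_integral_excluded_le:
  assumes k: "k \<le> K"
  shows "(\<Sum>D\<in>hist_set H k. alg_weight D * (\<integral>th. lik th D * indicator (excluded D) th \<partial>nu1)) \<le> 1 / real K"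
proof -
  define c where "c = real K * real (card Tb)"
  have c: "0 < c" unfolding c_def using K Tb_fin Tb_nonempty by (simp add: card_gt_0_iff)
  have "(\<Sum>D\<in>hist_set H k. alg_weight D * (\<integral>th. lik th D * indicator (excluded D) th \<partial>nu1))
          \<le> (\<Sum>D\<in>hist_set H k. alg_weight D * ((\<Sum>v\<in>Tb. hist_lik H v D) / c))"
  proof (intro sum_mono mult_left_mono alg_weight_nonneg)
    fix D :: "('o, 'a) data" assume D: "D \<in> hist_set H k"
    have "(\<integral>th. lik th D * indicator (excluded D) th \<partial>nu1) \<le> (\<integral>th. (\<Sum>v\<in>Tb. hist_lik H v D) / c \<partial>nu1)"
      using lik_excluded_le[OF _ D k] unfolding c_def
      by (intro integral_mono bounded_rv_integrable bounded_rv_mult bounded_rv_lik bounded_rv_indicator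
          sets_excluded bounded_rv_const) auto
    then show "(\<integral>th. lik th D * indicator (excluded D) th \<partial>nu1) \<le> (\<Sum>v\<in>Tb. hist_lik H v D) / c"
      by (simp add: prob_space)
  qed
  also have "\<dots> = (\<Sum>v\<in>Tb. \<Sum>D\<in>hist_set H k. alg_weight D * hist_lik H v D) / c"
    by (simp add: sum_divide_distrib sum_distrib_left sum.swap[of _ Tb])
  also have "\<dots> \<le> (\<Sum>v\<in>Tb. 1) / c"
    using Tb_valid c by (intro divide_right_mono sum_mono sum_alg_weight_hist_lik_le_1) auto
  also have "\<dots> = 1 / real K" unfolding c_def using Tb_fin Tb_nonempty by simp
  finally show ?thesis .
qed

lemma integral_lik_opt_value_le:
  "(\<integral>th. lik th D * opt_value H r (par th) \<partial>nu1)
     \<le> (\<Sum>pol\<in>Pi_c H. \<Sum>v\<in>Tb. cell_mass D pol v * (value_fn H r v pol + real H / real K))"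
proof -
  have bounded: "bounded_rv (\<lambda>th. lik th D * (value_fn H r (iota th) (canon H (planner th)) + real H / real K))"
    using bounded_rv_cells[of "\<lambda>pol v th. lik th D * (value_fn H r v pol + real H / real K)"]
    by (simp add: bounded_rv_mult bounded_rv_lik)
  have "(\<integral>th. lik th D * opt_value H r (par th) \<partial>nu1)
          \<le> (\<integral>th. lik th D * (value_fn H r (iota th) (canon H (planner th)) + real H / real K) \<partial>nu1)"
  proof (intro integral_mono bounded_rv_integrable bounded bounded_rv_mult bounded_rv_lik bounded_rv_opt_value)
    fix th assume th: "th \<in> space nu1"
    have "opt_value H r (par th) = value_fn H r (par th) (canon H (planner th))"
      by (simp add: opt_value_eq_sum_sampled[OF th] sum_indicator_sampled[OF th])
    then show "lik th D * opt_value H r (par th)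
                 \<le> lik th D * (value_fn H r (iota th) (canon H (planner th)) + real H / real K)"
      using value_fn_le_value_fn_iota[OF th] lik_nonneg[OF th] by (simp add: mult_left_mono)
  qed
  also have "\<dots> = (\<Sum>pol\<in>Pi_c H. \<Sum>v\<in>Tb. cell_mass D pol v * (value_fn H r v pol + real H / real K))"
    unfolding cell_mass_mult_right
    by (rule sum_integral_cells[symmetric]) (intro bounded_rv_mult bounded_rv_lik bounded_rv_const)
  finally show ?thesis .
qed

lemma integral_lik_value_fn_diff_le:
  assumes v: "v \<in> Tb"
  shows "value_fn H r v pol * evidence D - (\<integral>th. lik th D * value_fn H r (par th) pol \<partial>nu1)
           \<le> real H * of_bool (v \<notin> conf_set H K Tb D) * evidence D
              + real H * (\<integral>th. lik th D * conf_tv D pol th \<partial>nu1)"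
proof -
  have "value_fn H r v pol * evidence D - (\<integral>th. lik th D * value_fn H r (par th) pol \<partial>nu1)
          = (\<integral>th. lik th D * (value_fn H r v pol - value_fn H r (par th) pol) \<partial>nu1)"
    unfolding evidence_def right_diff_distrib
    by (subst Bochner_Integration.integral_diff)
       (auto simp: mult.commute intro!: bounded_rv_integrable bounded_rv_mult bounded_rv_lik bounded_rv_value_fn)
  also have "\<dots> \<le> (\<integral>th. lik th D * (real H * of_bool (v \<notin> conf_set H K Tb D) + real H * conf_tv D pol th) \<partial>nu1)"
    using value_fn_diff_le_conf_tv[OF _ v] lik_nonneg
    by (intro integral_mono mult_left_mono bounded_rv_integrable bounded_rv_mult bounded_rv_lik bounded_rv_diff
        bounded_rv_add bounded_rv_const bounded_rv_value_fn bounded_rv_conf_tv) auto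
  also have "\<dots> = real H * of_bool (v \<notin> conf_set H K Tb D) * evidence D
                   + real H * (\<integral>th. lik th D * conf_tv D pol th \<partial>nu1)"
    unfolding evidence_def distrib_left
    by (subst Bochner_Integration.integral_add)
       (auto simp: mult_ac intro!: bounded_rv_integrable bounded_rv_mult bounded_rv_lik bounded_rv_conf_tv)
  finally show ?thesis .
qed

text \<open>Given \<open>D\<close>, the sampled and the true parameter have the same law, so the optimal value of
  the true parameter may be traded for that of the sampled one, here via the cells.\<close>
lemma integral_lik_regret_le:
  "(\<integral>th. lik th D * (\<Sum>pol\<in>Pi_c H. alg D pol * (opt_value H r (par th) - value_fn H r (par th) pol)) \<partial>nu1)
     \<le> real H / real K * evidence D + real H * (\<integral>th. lik th D * indicator (excluded D) th \<partial>nu1)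
        + real H * (\<integral>th. lik th D * (\<Sum>pol\<in>Pi_c H. alg D pol * conf_tv D pol th) \<partial>nu1)"
proof (cases "evidence D = 0")
  case True
  then show ?thesis by (simp only: integral_lik_mult_evidence_0)
next
  case False
  then have Z: "0 < evidence D" using evidence_nonneg[of D] by linarith
  define q where "q = cell_mass D"
  define IV where "IV pol = (\<integral>th. lik th D * value_fn H r (par th) pol \<partial>nu1)" for pol
  define IM where "IM pol = (\<integral>th. lik th D * conf_tv D pol th \<partial>nu1)" for pol
  define excl where "excl v = (of_bool (v \<notin> conf_set H K Tb D) :: real)" for v
  have alg_eq: "alg D pol = (\<Sum>v\<in>Tb. q pol v / evidence D)" for pol
    unfolding q_def ps_alg_eq_sum_cell_mass by (rule sum_divide_distrib)
  have "(\<integral>th. lik th D * (\<Sum>pol\<in>Pi_c H. alg D pol * (opt_value H r (par th) - value_fn H r (par th) pol)) \<partial>nu1)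
          = (\<integral>th. lik th D * opt_value H r (par th) \<partial>nu1) - (\<Sum>pol\<in>Pi_c H. alg D pol * IV pol)"
    unfolding IV_def using False by (rule integral_lik_regret_eq)
  also have "\<dots> \<le> (\<Sum>pol\<in>Pi_c H. \<Sum>v\<in>Tb. q pol v * (value_fn H r v pol + real H / real K))
                   - (\<Sum>pol\<in>Pi_c H. \<Sum>v\<in>Tb. q pol v / evidence D * IV pol)"
    using integral_lik_opt_value_le unfolding q_def alg_eq by (simp add: sum_distrib_right)
  also have "\<dots> = (\<Sum>pol\<in>Pi_c H. \<Sum>v\<in>Tb. q pol v / evidence D * (value_fn H r v pol * evidence D - IV pol)
                                          + real H / real K * q pol v)"
    unfolding sum_subtractf[symmetric] using Z by (intro sum.cong refl) (simp add: field_simps)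
  also have "\<dots> \<le> (\<Sum>pol\<in>Pi_c H. \<Sum>v\<in>Tb. q pol v / evidence D * (real H * excl v * evidence D + real H * IM pol)
                                          + real H / real K * q pol v)"
    using integral_lik_value_fn_diff_le Z cell_mass_nonneg unfolding q_def IV_def IM_def excl_def
    by (intro sum_mono add_right_mono mult_left_mono divide_nonneg_pos) auto
  also have "\<dots> = (\<Sum>pol\<in>Pi_c H. \<Sum>v\<in>Tb. real H * (q pol v * excl v) + real H * (q pol v / evidence D * IM pol)
                                          + real H / real K * q pol v)"
    using Z by (intro sum.cong refl) (simp add: field_simps)
  also have "\<dots> = real H / real K * evidence D + real H * (\<Sum>pol\<in>Pi_c H. \<Sum>v\<in>Tb. q pol v * excl v)
                   + real H * (\<Sum>pol\<in>Pi_c H. alg D pol * IM pol)"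
    unfolding alg_eq sum_cell_mass[symmetric] q_def
    by (simp add: sum.distrib sum_distrib_left sum_distrib_right)
  also have "(\<Sum>pol\<in>Pi_c H. \<Sum>v\<in>Tb. q pol v * excl v) = (\<integral>th. lik th D * indicator (excluded D) th \<partial>nu1)"
    unfolding q_def excl_def integral_lik_excluded_eq_sum_cell_mass ..
  also have "(\<Sum>pol\<in>Pi_c H. alg D pol * IM pol) = (\<integral>th. lik th D * (\<Sum>pol\<in>Pi_c H. alg D pol * conf_tv D pol th) \<partial>nu1)"
    unfolding IM_def by (rule integral_lik_sum_ps_alg[symmetric]) (rule bounded_rv_conf_tv)
  finally show ?thesis .
qed

lemma regret_episode_le:
  assumes k: "k < K"
  shows "joint_exp H nu1 par alg K (\<lambda>th hs. opt_value H r (par th) - value_fn H r (par th) (fst (hs ! k)))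
           \<le> 2 * real H / real K + real H * joint_exp H nu1 par alg K (\<lambda>th hs. conf_tv (take k hs) (fst (hs ! k)) th)"
proof -
  define regret where "regret th D = (\<Sum>pol\<in>Pi_c H. alg D pol * (opt_value H r (par th) - value_fn H r (par th) pol))"
    for th D
  define tv where "tv th D = (\<Sum>pol\<in>Pi_c H. alg D pol * conf_tv D pol th)" for th D
  have bounded: "bounded_rv (\<lambda>th. regret th D)" "bounded_rv (\<lambda>th. tv th D)" for D
    unfolding regret_def tv_def
    by (intro bounded_rv_sum bounded_rv_mult bounded_rv_const bounded_rv_diff bounded_rv_opt_value
        bounded_rv_value_fn bounded_rv_conf_tv)+
  have "joint_exp H nu1 par alg K (\<lambda>th hs. opt_value H r (par th) - value_fn H r (par th) (fst (hs ! k)))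
          = (\<Sum>D\<in>hist_set H k. alg_weight D * (\<integral>th. lik th D * regret th D \<partial>nu1))"
    unfolding regret_def using k
    by (subst joint_exp_episode) (auto intro!: integral_sum_weighted_lik bounded_rv_diff bounded_rv_opt_value
        bounded_rv_value_fn bounded[unfolded regret_def])
  also have "\<dots> \<le> (\<Sum>D\<in>hist_set H k. alg_weight D * (real H / real K * evidence D
                     + real H * (\<integral>th. lik th D * indicator (excluded D) th \<partial>nu1)
                     + real H * (\<integral>th. lik th D * tv th D \<partial>nu1)))"
    unfolding regret_def tv_def by (intro sum_mono mult_left_mono alg_weight_nonneg integral_lik_regret_le)
  also have "\<dots> = real H / real K * (\<Sum>D\<in>hist_set H k. alg_weight D * evidence D)
                   + real H * (\<Sum>D\<in>hist_set H k. alg_weight D * (\<integral>th. lik th D * indicator (excluded D) th \<partial>nu1))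
                   + real H * (\<Sum>D\<in>hist_set H k. alg_weight D * (\<integral>th. lik th D * tv th D \<partial>nu1))"
    by (simp add: sum.distrib sum_distrib_left distrib_left mult_ac)
  also have "\<dots> \<le> real H / real K + real H * (1 / real K)
                   + real H * (\<Sum>D\<in>hist_set H k. alg_weight D * (\<integral>th. lik th D * tv th D \<partial>nu1))"
    using sum_alg_weight_integral_excluded_le[of k] k
    by (intro add_mono mult_left_mono) (auto simp: sum_alg_weight_evidence)
  also have "(\<Sum>D\<in>hist_set H k. alg_weight D * (\<integral>th. lik th D * tv th D \<partial>nu1))
               = joint_exp H nu1 par alg K (\<lambda>th hs. conf_tv (take k hs) (fst (hs ! k)) th)"
    unfolding tv_def using k
    by (subst joint_exp_episode) (auto intro!: integral_sum_weighted_lik[symmetric] bounded_rv_conf_tv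
        bounded[unfolded tv_def])
  finally show ?thesis by simp
qed

lemma regret_bound:
  "breg H r nu1 par alg K
     \<le> 2 * real H + real H * joint_exp H nu1 par alg K (\<lambda>th hs. \<Sum>k<K. conf_tv (take k hs) (fst (hs ! k)) th)"
proof -
  have "breg H r nu1 par alg K
          = (\<Sum>k<K. joint_exp H nu1 par alg K (\<lambda>th hs. opt_value H r (par th) - value_fn H r (par th) (fst (hs ! k))))"
    unfolding breg_def by (intro joint_exp_sum bounded_rv_diff bounded_rv_opt_value bounded_rv_value_fn)
  also have "\<dots> \<le> (\<Sum>k<K. 2 * real H / real K + real H * joint_exp H nu1 par alg K (\<lambda>th hs. conf_tv (take k hs) (fst (hs ! k)) th))"
    by (intro sum_mono regret_episode_le) simp
  also have "\<dots> = 2 * real H + real H * joint_exp H nu1 par alg K (\<lambda>th hs. \<Sum>k<K. conf_tv (take k hs) (fst (hs ! k)) th)"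
    using K by (simp add: sum.distrib sum_distrib_left[symmetric] joint_exp_sum bounded_rv_conf_tv)
  finally show ?thesis .
qed

end

theorem lemma1:
  fixes H K :: nat
    and eps :: real
    and r :: "nat \<Rightarrow> 'o::finite \<Rightarrow> 'a::finite \<Rightarrow> real"
    and nu1 :: "'p measure"
    and par :: "'p \<Rightarrow> ('s::finite, 'a, 'o) pvec"
    and planner :: "'p \<Rightarrow> ('o, 'a) policy"
    and Tb :: "('s, 'a, 'o) pvec set"
    and iota :: "'p \<Rightarrow> ('s, 'a, 'o) pvec"
  assumes H: "1 \<le> H" and K: "1 \<le> K"
    and eps: "eps = 1 / (2 * real H * real K)"
    and rew: "\<forall>h\<in>{1..H}. \<forall>ob a. 0 \<le> r h ob a \<and> r h ob a \<le> 1"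
    and prior: "prob_space nu1"
    and par_valid: "\<forall>th\<in>space nu1. valid_pvec H (par th)"
    and par_meas_b: "\<forall>s. (\<lambda>th. init (par th) s) \<in> borel_measurable nu1"
    and par_meas_T: "\<forall>h\<in>{1..<H}. \<forall>s a s'. (\<lambda>th. trans (par th) h s a s') \<in> borel_measurable nu1"
    and par_meas_Z: "\<forall>h\<in>{1..H}. \<forall>s ob. (\<lambda>th. obsv (par th) h s ob) \<in> borel_measurable nu1"
    and planner_opt: "\<forall>th\<in>space nu1. \<forall>pol. value_fn H r (par th) pol \<le> value_fn H r (par th) (planner th)"
    and planner_meas: "\<forall>pol. {th \<in> space nu1. canon H (planner th) = pol} \<in> sets nu1"
    and Tb_fin: "finite Tb"
    and Tb_valid: "\<forall>v\<in>Tb. valid_pvec H v"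
    and iota_onto: "iota ` space nu1 = Tb"
    and iota_meas: "\<forall>v\<in>Tb. {th \<in> space nu1. iota th = v} \<in> sets nu1"
    and iota_tv: "\<forall>th\<in>space nu1. \<forall>pol.
                    tv_dist H (pr_pi H (iota th) pol) (pr_pi H (par th) pol) \<le> 2 * real H * eps"
    and iota_lb: "\<forall>th\<in>space nu1. \<forall>tau\<in>traj_set H.
                    pr_minus H (par th) tau / (1 + eps) ^ (2 * H) \<le> pr_minus H (iota th) tau"
  shows "breg H r nu1 par (ps_alg H nu1 par planner) K
         \<le> 2 * real H + real H *
           joint_exp H nu1 par (ps_alg H nu1 par planner) K
             (\<lambda>th hs. \<Sum>k<K. Max ((\<lambda>v. tv_dist H (pr_pi H v (fst (hs ! k))) (pr_pi H (par th) (fst (hs ! k))))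
                                   ` conf_set H K Tb (take k hs)))"
proof -
  interpret discretised_posterior_sampling H r nu1 par planner K eps Tb iota
    using assms
    by (intro discretised_posterior_sampling.intro posterior_sampling.intro
        discretised_posterior_sampling_axioms.intro) simp_all
  show ?thesis using regret_bound unfolding conf_tv_def .
qed

end
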